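(* Let $(F_S,\iota)$ be an embedded local étale algebra, $\Gamma\subseteq\mathrm{PGL}_2(F_S)$ a semi-simple plectic subgroup and $\gamma\in\Gamma$ an element of finite order. Then $\gamma$ fixes a polysimplex of $\mathcal T_\Gamma$.
   Context: Fix a prime $p$ and let $\mathbf{C}$ be the completion of an algebraic closure of $\mathbb{Q}_p$ or of $\mathbb{F}_p((T))$. An embedded local étale algebra $(F_S,\iota)$ consists of a finite non-empty set $S$, non-Archimedean local fields $F_\mathfrak p$ ($\mathfrak p\in S$) of residue characteristic $p$ and the same characteristic as $\mathbf C$, and embeddings $\iota_\mathfrak p\colon F_\mathfrak p\hookrightarrow\mathbf C$ (so $\mathbb P^1(F_\mathfrak p)\subseteq\mathbb P^1(\mathbf C)$). $\mathrm{PGL}_2(F_S)=\prod_\mathfrak p\mathrm{PGL}_2(F_\mathfrak p)$ acts componentwise by Möbius transformations on $\prod_{\mathfrak p\in S}\mathbb P^1(\mathbf C)$. The limit set $\mathcal L^S_\Gamma$ of a subgroup $\Gamma$ is the set of $x$ with $\gamma_j(y)\to x$ for some $y$ and pairwise distinct $\gamma_j\in\Gamma$. $\Gamma$ is plectic if $\mathcal L^S_\Gamma=\bigcup_\mathfrak p\big(\mathcal L_{\Gamma,\mathfrak p}\times\prod_{\mathfrak q\ne\mathfrak p}\mathbb P^1(\mathbf C)\big)$ for some subsets $\mathcal L_{\Gamma,\mathfrak p}\subseteq\mathbb P^1(F_\mathfrak p)$, and semi-simple if no $\mathcal L_{\Gamma,\mathfrak p}$ has exactly one element. For such $\Gamma$,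 $\mathcal T_{\Gamma,\mathfrak p}$ is a single vertex if $\mathcal L_{\Gamma,\mathfrak p}=\emptyset$, and otherwise the union of all geodesics in the Bruhat–Tits tree of $\mathrm{PGL}_2(F_\mathfrak p)$ (ends identified with $\mathbb P^1(F_\mathfrak p)$) joining two distinct points of $\mathcal L_{\Gamma,\mathfrak p}$; $\Gamma$ acts (via the projections) on the polysimplicial complex $\mathcal T_\Gamma=\prod_\mathfrak p\mathcal T_{\Gamma,\mathfrak p}$, whose polysimplices are products of vertices and edges of the factors. *)

theory Defs
  imports Complex_Main "HOL-Computational_Algebra.Polynomial"
begin

definition nonarch_abs :: "('c::field \<Rightarrow> real) \<Rightarrow> bool" where
  "nonarch_abs av \<longleftrightarrow> (\<forall>x. av x \<ge> 0) \<and> (\<forall>x. av x = 0 \<longleftrightarrow> x = 0)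
     \<and> (\<forall>x y. av (x * y) = av x * av y) \<and> (\<forall>x y. av (x + y) \<le> max (av x) (av y))
     \<and> (\<exists>x. av x \<noteq> 0 \<and> av x \<noteq> 1)"

definition av_conv :: "('c::field \<Rightarrow> real) \<Rightarrow> (nat \<Rightarrow> 'c) \<Rightarrow> 'c \<Rightarrow> bool" where
  "av_conv av X L \<longleftrightarrow> (\<lambda>n. av (X n - L)) \<longlonglongrightarrow> 0"

definition av_complete :: "('c::field \<Rightarrow> real) \<Rightarrow> bool" where
  "av_complete av \<longleftrightarrow> (\<forall>X. (\<forall>e>0. \<exists>N. \<forall>m\<ge>N. \<forall>n\<ge>N. av (X m - X n) < e) \<longrightarrow> (\<exists>L. av_conv av X L))"

definition av_closure :: "('c::field \<Rightarrow> real) \<Rightarrow> 'c set \<Rightarrow> 'c set" where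
  "av_closure av A = {L. \<exists>X. range X \<subseteq> A \<and> av_conv av X L}"

definition av_closed :: "('c::field \<Rightarrow> real) \<Rightarrow> 'c set \<Rightarrow> bool" where
  "av_closed av A \<longleftrightarrow> av_closure av A \<subseteq> A"

definition av_dense :: "('c::field \<Rightarrow> real) \<Rightarrow> 'c set \<Rightarrow> bool" where
  "av_dense av A \<longleftrightarrow> (\<forall>x. \<forall>e>0. \<exists>y\<in>A. av (x - y) < e)"

definition subfield :: "'c::field set \<Rightarrow> bool" where
  "subfield K \<longleftrightarrow> 0 \<in> K \<and> 1 \<in> K \<and> (\<forall>x\<in>K. \<forall>y\<in>K. x + y \<in> K \<and> x - y \<in> K \<and> x * y \<in> K)
     \<and> (\<forall>x\<in>K. inverse x \<in> K)"

definition gen_subfield :: "'c::field set \<Rightarrow> 'c set" where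
  "gen_subfield A = \<Inter>{K. subfield K \<and> A \<subseteq> K}"

definition alg_closure_in :: "'c::field set \<Rightarrow> 'c set" where
  "alg_closure_in K = {x. \<exists>q. q \<noteq> 0 \<and> (\<forall>i. coeff q i \<in> K) \<and> poly q x = 0}"

definition alg_closed_field :: "'c::field itself \<Rightarrow> bool" where
  "alg_closed_field TYPE('c) \<longleftrightarrow> (\<forall>q::'c poly. degree q > 0 \<longrightarrow> (\<exists>x. poly q x = 0))"

text \<open>(C, av) is (isometric up to equivalence of absolute values to) the completion of an
  algebraic closure of Q_p (char 0 case) or of F_p((T)) (char p case): it is complete,
  algebraically closed, and the algebraic closure of the closure K0 of the prime field
  (resp. of F_p(T) with 0 < |T| < 1) is dense.  Residue characteristic p: |p| < 1.\<close>
definition is_C :: "nat \<Rightarrow> ('c::field \<Rightarrow> real) \<Rightarrow> bool" where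
  "is_C p av \<longleftrightarrow> prime p \<and> nonarch_abs av \<and> av_complete av \<and> alg_closed_field TYPE('c)
     \<and> av (of_nat p) < 1
     \<and> (((\<forall>n::nat. n > 0 \<longrightarrow> of_nat n \<noteq> (0::'c))
            \<and> av_dense av (alg_closure_in (av_closure av (gen_subfield {}))))
        \<or> (of_nat p = (0::'c) \<and> (\<exists>T. 0 < av T \<and> av T < 1
            \<and> av_dense av (alg_closure_in (av_closure av (gen_subfield {T}))))))"

definition valring :: "('c::field \<Rightarrow> real) \<Rightarrow> 'c set \<Rightarrow> 'c set" where
  "valring av F = {x\<in>F. av x \<le> 1}"

definition uniformizer :: "('c::field \<Rightarrow> real) \<Rightarrow> 'c set \<Rightarrow> 'c \<Rightarrow> bool" where
  "uniformizer av F \<pi> \<longleftrightarrow> \<pi> \<in> F \<and> 0 < av \<pi> \<and> av \<pi> < 1 \<and> (\<forall>x\<in>F. av x < 1 \<longrightarrow> av x \<le> av \<pi>)"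

text \<open>A non-Archimedean local field inside C: a closed (hence complete) subfield whose
  induced absolute value is discrete and non-trivial, with finite residue field.\<close>
definition local_field :: "('c::field \<Rightarrow> real) \<Rightarrow> 'c set \<Rightarrow> bool" where
  "local_field av F \<longleftrightarrow> subfield F \<and> av_closed av F \<and> (\<exists>\<pi>. uniformizer av F \<pi>)
     \<and> (\<exists>R. finite R \<and> R \<subseteq> valring av F \<and> (\<forall>x\<in>valring av F. \<exists>r\<in>R. av (x - r) < 1))"

type_synonym 'c P1 = "'c option"  \<comment> \<open>None is the point at infinity\<close>
type_synonym 'c mat2 = "'c \<times> 'c \<times> 'c \<times> 'c" \<comment> \<open>(a,b,c,d) = [[a,b],[c,d]]\<close>
type_synonym 'c vec2 = "'c \<times> 'c"

definition P1_of :: "'c set \<Rightarrow> 'c P1 set" where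
  "P1_of F = insert None (Some ` F)"

fun mdet :: "'c::field mat2 \<Rightarrow> 'c" where
  "mdet (a, b, c, d) = a * d - b * c"

fun mmult :: "'c::field mat2 \<Rightarrow> 'c mat2 \<Rightarrow> 'c mat2" where
  "mmult (a, b, c, d) (a', b', c', d') =
     (a * a' + b * c', a * b' + b * d', c * a' + d * c', c * b' + d * d')"

fun minv :: "'c::field mat2 \<Rightarrow> 'c mat2" where
  "minv (a, b, c, d) = (let e = a * d - b * c in (d / e, - b / e, - c / e, a / e))"

fun msmult :: "'c::field \<Rightarrow> 'c mat2 \<Rightarrow> 'c mat2" where
  "msmult t (a, b, c, d) = (t * a, t * b, t * c, t * d)"

fun mvec :: "'c::field mat2 \<Rightarrow> 'c vec2 \<Rightarrow> 'c vec2" where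
  "mvec (a, b, c, d) (x, y) = (a * x + b * y, c * x + d * y)"

definition GL2 :: "'c::field set \<Rightarrow> 'c mat2 set" where
  "GL2 F = {(a, b, c, d). a \<in> F \<and> b \<in> F \<and> c \<in> F \<and> d \<in> F \<and> a * d - b * c \<noteq> 0}"

text \<open>An element of PGL_2(F): the class of an invertible matrix modulo F^*.\<close>
definition mclass :: "'c::field set \<Rightarrow> 'c mat2 \<Rightarrow> 'c mat2 set" where
  "mclass F A = {msmult t A | t. t \<in> F \<and> t \<noteq> 0}"

fun mobius :: "'c::field mat2 \<Rightarrow> 'c P1 \<Rightarrow> 'c P1" where
  "mobius (a, b, c, d) None = (if c = 0 then None else Some (a / c))"
| "mobius (a, b, c, d) (Some x) = (if c * x + d = 0 then None else Some ((a * x + b) / (c * x + d)))"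

text \<open>Action of a PGL_2 class via a representative (independent of the choice).\<close>
definition pgl_act :: "'c::field mat2 set \<Rightarrow> 'c P1 \<Rightarrow> 'c P1" where
  "pgl_act g z = mobius (SOME A. A \<in> g) z"

definition PGL2_S :: "'s set \<Rightarrow> ('s \<Rightarrow> 'c::field set) \<Rightarrow> ('s \<Rightarrow> 'c mat2 set) set" where
  "PGL2_S S F = {g. (\<forall>s\<in>S. \<exists>A. A \<in> GL2 (F s) \<and> g s = mclass (F s) A) \<and> (\<forall>s. s \<notin> S \<longrightarrow> g s = {})}"

definition pgl_one :: "'s set \<Rightarrow> ('s \<Rightarrow> 'c::field set) \<Rightarrow> ('s \<Rightarrow> 'c mat2 set)" where
  "pgl_one S F = (\<lambda>s. if s \<in> S then mclass (F s) (1, 0, 0, 1) else {})"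

definition pgl_mult :: "('s \<Rightarrow> 'c::field mat2 set) \<Rightarrow> ('s \<Rightarrow> 'c mat2 set) \<Rightarrow> ('s \<Rightarrow> 'c mat2 set)" where
  "pgl_mult g h = (\<lambda>s. {mmult A B | A B. A \<in> g s \<and> B \<in> h s})"

definition pgl_inv :: "('s \<Rightarrow> 'c::field mat2 set) \<Rightarrow> ('s \<Rightarrow> 'c mat2 set)" where
  "pgl_inv g = (\<lambda>s. minv ` g s)"

primrec pgl_pow :: "'s set \<Rightarrow> ('s \<Rightarrow> 'c::field set) \<Rightarrow> ('s \<Rightarrow> 'c mat2 set) \<Rightarrow> nat \<Rightarrow> ('s \<Rightarrow> 'c mat2 set)" where
  "pgl_pow S F g 0 = pgl_one S F"
| "pgl_pow S F g (Suc n) = pgl_mult g (pgl_pow S F g n)"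

definition pgl_subgroup :: "'s set \<Rightarrow> ('s \<Rightarrow> 'c::field set) \<Rightarrow> ('s \<Rightarrow> 'c mat2 set) set \<Rightarrow> bool" where
  "pgl_subgroup S F \<Gamma> \<longleftrightarrow> \<Gamma> \<subseteq> PGL2_S S F \<and> pgl_one S F \<in> \<Gamma>
     \<and> (\<forall>g\<in>\<Gamma>. \<forall>h\<in>\<Gamma>. pgl_mult g h \<in> \<Gamma>) \<and> (\<forall>g\<in>\<Gamma>. pgl_inv g \<in> \<Gamma>)"

definition finite_order :: "'s set \<Rightarrow> ('s \<Rightarrow> 'c::field set) \<Rightarrow> ('s \<Rightarrow> 'c mat2 set) \<Rightarrow> bool" where
  "finite_order S F g \<longleftrightarrow> (\<exists>n>0. pgl_pow S F g n = pgl_one S F)"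

definition P1_conv :: "('c::field \<Rightarrow> real) \<Rightarrow> (nat \<Rightarrow> 'c P1) \<Rightarrow> 'c P1 \<Rightarrow> bool" where
  "P1_conv av X x \<longleftrightarrow> (case x of
      Some a \<Rightarrow> (\<forall>e>0. eventually (\<lambda>n. \<exists>z. X n = Some z \<and> av (z - a) < e) sequentially)
    | None \<Rightarrow> (\<forall>M. eventually (\<lambda>n. X n = None \<or> (\<exists>z. X n = Some z \<and> av z > M)) sequentially))"

definition PS :: "'s set \<Rightarrow> ('s \<Rightarrow> 'c P1) set" where
  "PS S = {x. \<forall>s. s \<notin> S \<longrightarrow> x s = None}"

definition limit_set :: "('c::field \<Rightarrow> real) \<Rightarrow> 's set \<Rightarrow> ('s \<Rightarrow> 'c mat2 set) set \<Rightarrow> ('s \<Rightarrow> 'c P1) set" where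
  "limit_set av S \<Gamma> = {x \<in> PS S. \<exists>y \<in> PS S. \<exists>\<gamma>::nat \<Rightarrow> ('s \<Rightarrow> 'c mat2 set).
      inj \<gamma> \<and> range \<gamma> \<subseteq> \<Gamma> \<and> (\<forall>s\<in>S. P1_conv av (\<lambda>j. pgl_act (\<gamma> j s) (y s)) (x s))}"

definition plectic_semisimple_with ::
  "('c::field \<Rightarrow> real) \<Rightarrow> 's set \<Rightarrow> ('s \<Rightarrow> 'c set) \<Rightarrow> ('s \<Rightarrow> 'c mat2 set) set \<Rightarrow> ('s \<Rightarrow> 'c P1 set) \<Rightarrow> bool" where
  "plectic_semisimple_with av S F \<Gamma> Lp \<longleftrightarrow>
     (\<forall>s\<in>S. Lp s \<subseteq> P1_of (F s) \<and> (\<forall>a. Lp s \<noteq> {a}))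
     \<and> limit_set av S \<Gamma> = {x \<in> PS S. \<exists>s\<in>S. x s \<in> Lp s}"

definition lattice_span :: "('c::field \<Rightarrow> real) \<Rightarrow> 'c set \<Rightarrow> 'c vec2 \<Rightarrow> 'c vec2 \<Rightarrow> 'c vec2 set" where
  "lattice_span av F u w = {(a * fst u + b * fst w, a * snd u + b * snd w) | a b.
      a \<in> valring av F \<and> b \<in> valring av F}"

definition is_lattice :: "('c::field \<Rightarrow> real) \<Rightarrow> 'c set \<Rightarrow> 'c vec2 set \<Rightarrow> bool" where
  "is_lattice av F L \<longleftrightarrow> (\<exists>u w. fst u \<in> F \<and> snd u \<in> F \<and> fst w \<in> F \<and> snd w \<in> F
      \<and> fst u * snd w - snd u * fst w \<noteq> 0 \<and> L = lattice_span av F u w)"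

definition vscale :: "'c::field \<Rightarrow> 'c vec2 set \<Rightarrow> 'c vec2 set" where
  "vscale t L = (\<lambda>(x, y). (t * x, t * y)) ` L"

definition hclass :: "'c::field set \<Rightarrow> 'c vec2 set \<Rightarrow> 'c vec2 set set" where
  "hclass F L = {vscale t L | t. t \<in> F \<and> t \<noteq> 0}"

definition bt_vertices :: "('c::field \<Rightarrow> real) \<Rightarrow> 'c set \<Rightarrow> 'c vec2 set set set" where
  "bt_vertices av F = {hclass F L | L. is_lattice av F L}"

definition bt_adj :: "('c::field \<Rightarrow> real) \<Rightarrow> 'c set \<Rightarrow> 'c vec2 set set \<Rightarrow> 'c vec2 set set \<Rightarrow> bool" where
  "bt_adj av F v w \<longleftrightarrow> v \<in> bt_vertices av F \<and> w \<in> bt_vertices av F \<and>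
     (\<exists>L\<in>v. \<exists>L'\<in>w. \<exists>\<pi>. uniformizer av F \<pi> \<and> vscale \<pi> L \<subset> L' \<and> L' \<subset> L)"

definition pgl_act_vertex :: "'c::field mat2 set \<Rightarrow> 'c vec2 set set \<Rightarrow> 'c vec2 set set" where
  "pgl_act_vertex g v = (\<lambda>L. mvec (SOME A. A \<in> g) ` L) ` v"

text \<open>Standard identification of P^1(F) with the ends: the point z corresponds to the line
  spanned by (z,1), infinity to the line spanned by (1,0).\<close>
fun P1_vec :: "'c::field P1 \<Rightarrow> 'c vec2" where
  "P1_vec None = (1, 0)"
| "P1_vec (Some z) = (z, 1)"

text \<open>Vertices of the geodesic (apartment) joining two distinct ends l1, l2.\<close>
definition geodesic :: "('c::field \<Rightarrow> real) \<Rightarrow> 'c set \<Rightarrow> 'c P1 \<Rightarrow> 'c P1 \<Rightarrow> 'c vec2 set set set" where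
  "geodesic av F l1 l2 = {hclass F (lattice_span av F (P1_vec l1)
       (t * fst (P1_vec l2), t * snd (P1_vec l2))) | t. t \<in> F \<and> t \<noteq> 0}"

text \<open>The tree T_{Gamma,p}: vertices and edges. vtx s is the chosen single vertex
  used when Lp s is empty.\<close>
definition T_vertices :: "('c::field \<Rightarrow> real) \<Rightarrow> 'c set \<Rightarrow> 'c P1 set \<Rightarrow> 'c vec2 set set \<Rightarrow> 'c vec2 set set set" where
  "T_vertices av F L v0 = (if L = {} then {v0}
      else \<Union>{geodesic av F l1 l2 | l1 l2. l1 \<in> L \<and> l2 \<in> L \<and> l1 \<noteq> l2})"

definition T_edges :: "('c::field \<Rightarrow> real) \<Rightarrow> 'c set \<Rightarrow> 'c P1 set \<Rightarrow> 'c vec2 set set set set" where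
  "T_edges av F L = {{v, w} | v w. bt_adj av F v w \<and>
      (\<exists>l1 l2. l1 \<in> L \<and> l2 \<in> L \<and> l1 \<noteq> l2 \<and> v \<in> geodesic av F l1 l2 \<and> w \<in> geodesic av F l1 l2)}"

text \<open>Polysimplices of T_Gamma = prod_p T_{Gamma,p}: each factor is a vertex or an edge.\<close>
definition polysimplex ::
  "('c::field \<Rightarrow> real) \<Rightarrow> 's set \<Rightarrow> ('s \<Rightarrow> 'c set) \<Rightarrow> ('s \<Rightarrow> 'c P1 set) \<Rightarrow> ('s \<Rightarrow> 'c vec2 set set)
     \<Rightarrow> ('s \<Rightarrow> 'c vec2 set set set) \<Rightarrow> bool" where
  "polysimplex av S F Lp vtx \<sigma> \<longleftrightarrow> (\<forall>s. s \<notin> S \<longrightarrow> \<sigma> s = {}) \<and>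
     (\<forall>s\<in>S. (\<exists>v\<in>T_vertices av (F s) (Lp s) (vtx s). \<sigma> s = {v})
            \<or> \<sigma> s \<in> T_edges av (F s) (Lp s))"

end

theory Submission
  imports Defs
begin

text \<open>
  Fix a place s and let A represent \<gamma> at s. If the component L = Lp s of the limit set is empty,
  T_{\<Gamma>,s} is the chosen \<Gamma>-fixed vertex. Otherwise L is \<Gamma>-invariant: a point of the limit set
  whose coordinates away from s are not F-rational lies in it only because of its s-th coordinate,
  and \<Gamma> preserves F-rationality. Some power of A is scalar, so the eigenvalues of A (in C) have
  the same absolute value. If A fixes a point l of L, then in the basis given by l and another
  point of L the matrix of A is triangular with diagonal entries of equal absolute value, and A
  fixes a vertex of the geodesic joining the two points. Otherwise A moves l to another point
  A l of L; in the basis given by l and A l the matrix of A is ((0, r), (q, s)) with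
  |s|^2 \<le> |q r|, and according to the parity of the valuation of q r, A fixes a vertex of the
  geodesic from l to A l or swaps the two vertices of one of its edges.
\<close>

section \<open>Non-Archimedean absolute values\<close>

locale nonarch_valued =
  fixes av :: "'c::field \<Rightarrow> real"
  assumes nonarch_abs: "nonarch_abs av"
begin

lemma av_nonneg [simp]: "0 \<le> av x"
  using nonarch_abs by (simp add: nonarch_abs_def)

lemma av_eq_0_iff [simp]: "av x = 0 \<longleftrightarrow> x = 0"
  using nonarch_abs by (simp add: nonarch_abs_def)

lemma av_0 [simp]: "av 0 = 0"
  by simp

lemma av_pos_iff [simp]: "0 < av x \<longleftrightarrow> x \<noteq> 0"
  using av_nonneg[of x] av_eq_0_iff[of x] by linarith

lemma av_mult [simp]: "av (x * y) = av x * av y"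
  using nonarch_abs by (simp add: nonarch_abs_def)

lemma av_ultrametric: "av (x + y) \<le> max (av x) (av y)"
  using nonarch_abs by (simp add: nonarch_abs_def)

lemma av_1 [simp]: "av 1 = 1"
  using av_mult[of 1 1] av_eq_0_iff[of 1] by (metis mult_cancel_left1 one_neq_zero)

lemma av_minus [simp]: "av (- x) = av x"
proof -
  have "av (- 1) * av (- 1) = 1"
    using av_mult[of "- 1" "- 1"] by simp
  then have "av (- 1) = 1"
    using av_nonneg[of "- 1"] by (metis linorder_not_le mult_le_cancel_right2 nle_le not_one_le_zero)
  then show ?thesis
    using av_mult[of "- 1" x] by simp
qed

lemma av_diff_commute: "av (x - y) = av (y - x)"
  using av_minus[of "x - y"] by simp

lemma av_inverse [simp]: "av (inverse x) = inverse (av x)"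
proof (cases "x = 0")
  case False
  then have "av (inverse x) * av x = 1"
    using av_mult[of "inverse x" x] by simp
  then show ?thesis
    by (metis inverse_unique mult.commute)
qed simp

lemma av_divide [simp]: "av (x / y) = av x / av y"
  by (simp add: divide_inverse)

lemma av_power [simp]: "av (x ^ n) = av x ^ n"
  by (induction n) simp_all

lemma av_power_int [simp]: "av (power_int x k) = power_int (av x) k"
  by (simp add: power_int_def)

lemma av_add_le: "av x \<le> e \<Longrightarrow> av y \<le> e \<Longrightarrow> av (x + y) \<le> e"
  using av_ultrametric[of x y] by simp

lemma av_add_eq_left: assumes "av y < av x" shows "av (x + y) = av x"
proof -
  have "av x \<le> max (av (x + y)) (av (- y))"
    using av_ultrametric[of "x + y" "- y"] by simp
  then show ?thesis
    using av_ultrametric[of x y] assms by (auto simp: max_def split: if_splits)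
qed

end

section \<open>Subfields and discrete valuations\<close>

lemma subfield_0: "subfield K \<Longrightarrow> 0 \<in> K"
  and subfield_1: "subfield K \<Longrightarrow> 1 \<in> K"
  and subfield_add: "subfield K \<Longrightarrow> x \<in> K \<Longrightarrow> y \<in> K \<Longrightarrow> x + y \<in> K"
  and subfield_diff: "subfield K \<Longrightarrow> x \<in> K \<Longrightarrow> y \<in> K \<Longrightarrow> x - y \<in> K"
  and subfield_mult: "subfield K \<Longrightarrow> x \<in> K \<Longrightarrow> y \<in> K \<Longrightarrow> x * y \<in> K"
  and subfield_inverse: "subfield K \<Longrightarrow> x \<in> K \<Longrightarrow> inverse x \<in> K"
  by (simp_all add: subfield_def)

lemma subfield_divide: "subfield K \<Longrightarrow> x \<in> K \<Longrightarrow> y \<in> K \<Longrightarrow> x / y \<in> K"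
  by (simp add: divide_inverse subfield_mult subfield_inverse)

lemma subfield_minus: "subfield K \<Longrightarrow> x \<in> K \<Longrightarrow> - x \<in> K"
  using subfield_diff[of K 0 x] subfield_0[of K] by simp

lemma subfield_power: "subfield K \<Longrightarrow> x \<in> K \<Longrightarrow> x ^ n \<in> K"
  by (induction n) (simp_all add: subfield_1 subfield_mult)

lemma subfield_power_int: "subfield K \<Longrightarrow> x \<in> K \<Longrightarrow> power_int x k \<in> K"
  by (simp add: power_int_def subfield_power subfield_inverse)

locale valued_subfield = nonarch_valued av for av :: "'c::field \<Rightarrow> real" +
  fixes F :: "'c set"
  assumes subfield: "subfield F"
begin

lemmas F_0 = subfield_0[OF subfield] and F_1 = subfield_1[OF subfield]
  and F_add = subfield_add[OF subfield] and F_diff = subfield_diff[OF subfield]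
  and F_mult = subfield_mult[OF subfield] and F_divide = subfield_divide[OF subfield]
  and F_minus = subfield_minus[OF subfield] and F_power_int = subfield_power_int[OF subfield]

lemma valring_iff: "x \<in> valring av F \<longleftrightarrow> x \<in> F \<and> av x \<le> 1"
  by (simp add: valring_def)

lemma valring_add: "x \<in> valring av F \<Longrightarrow> y \<in> valring av F \<Longrightarrow> x + y \<in> valring av F"
  by (simp add: valring_iff F_add av_add_le)

lemma valring_mult: "x \<in> valring av F \<Longrightarrow> y \<in> valring av F \<Longrightarrow> x * y \<in> valring av F"
  by (simp add: valring_iff F_mult mult_le_one)

end

locale discretely_valued_subfield = valued_subfield av F for av :: "'c::field \<Rightarrow> real" and F +
  fixes \<pi> :: 'c
  assumes uniformizer: "uniformizer av F \<pi>"
begin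

lemma \<pi>_in_F: "\<pi> \<in> F" and av_\<pi>_pos: "0 < av \<pi>" and av_\<pi>_less_1: "av \<pi> < 1"
  and av_less_1_le_\<pi>: "x \<in> F \<Longrightarrow> av x < 1 \<Longrightarrow> av x \<le> av \<pi>"
  using uniformizer by (auto simp: uniformizer_def)

lemma \<pi>_nonzero: "\<pi> \<noteq> 0"
  using av_\<pi>_pos by auto

lemma av_eq_power_int_\<pi>:
  assumes x: "x \<in> F" "x \<noteq> 0"
  shows "\<exists>k::int. av x = power_int (av \<pi>) k"
proof -
  define \<rho> where "\<rho> = av \<pi>"
  have \<rho>: "0 < \<rho>" "\<rho> < 1"
    using av_\<pi>_pos av_\<pi>_less_1 by (simp_all add: \<rho>_def)
  have ax: "av x > 0"
    using x by simp
  have ln\<rho>: "ln \<rho> < 0"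
    using ln_less_zero[OF \<rho>] .
  \<comment> \<open>k is chosen with \<rho>^(k+1) < |x| \<le> \<rho>^k; then y = x \<pi>^(-k) has \<rho> < |y| \<le> 1, forcing |y| = 1.\<close>
  define k where "k = \<lfloor>ln (av x) / ln \<rho>\<rfloor>"
  have pk: "power_int \<rho> j = exp (real_of_int j * ln \<rho>)" for j
    using \<rho> powr_real_of_int[of \<rho> j] by (simp add: powr_def power_int_def power_inverse)
  have "real_of_int k * ln \<rho> \<ge> ln (av x)"
    using ln\<rho> by (simp add: k_def neg_le_divide_eq[symmetric])
  then have upper: "av x \<le> power_int \<rho> k"
    unfolding pk using ax by (metis exp_le_cancel_iff exp_ln)
  have "(real_of_int k + 1) * ln \<rho> < ln (av x)"
    using ln\<rho> by (simp add: k_def neg_divide_less_eq[symmetric])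
  then have "power_int \<rho> (k + 1) < av x"
    unfolding pk using ax by (metis exp_less_cancel_iff exp_ln of_int_add of_int_1)
  then have lower: "power_int \<rho> k * \<rho> < av x"
    using \<rho> by (simp add: power_int_add)
  define y where "y = x * power_int \<pi> (- k)"
  have y: "y \<in> F" "av y = av x / power_int \<rho> k"
    using x \<pi>_in_F by (simp add: y_def F_mult F_power_int)
      (simp add: y_def \<rho>_def power_int_minus divide_inverse)
  have pos: "0 < power_int \<rho> k"
    using \<rho> by simp
  have "av y \<le> 1" "\<rho> < av y"
    using upper lower pos unfolding y(2) by (simp_all add: less_divide_eq mult.commute)
  then have "av y = 1"
    using av_less_1_le_\<pi>[OF y(1)] by (fastforce simp: \<rho>_def)
  then have "av x = power_int \<rho> k"
    using y(2) pos by simp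
  then show ?thesis
    unfolding \<rho>_def ..
qed

lemma exists_sqrt_av:
  assumes x: "x \<in> F" "x \<noteq> 0"
  shows "\<exists>\<mu>\<in>F. \<mu> \<noteq> 0 \<and> (av x = av \<mu> * av \<mu> \<or> av x = av \<pi> * (av \<mu> * av \<mu>))"
proof -
  obtain k where k: "av x = power_int (av \<pi>) k"
    using av_eq_power_int_\<pi>[OF x] ..
  define j where "j = k div 2"
  define \<mu> where "\<mu> = power_int \<pi> j"
  have \<mu>: "\<mu> \<in> F" "\<mu> \<noteq> 0" "av \<mu> = power_int (av \<pi>) j"
    using \<pi>_in_F \<pi>_nonzero by (simp_all add: \<mu>_def F_power_int)
  have \<rho>: "av \<pi> \<noteq> 0"
    using \<pi>_nonzero by simp
  have "k = j + j \<or> k = 1 + (j + j)"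
    unfolding j_def by presburger
  then have "av x = av \<mu> * av \<mu> \<or> av x = av \<pi> * (av \<mu> * av \<mu>)"
    unfolding k \<mu>(3) using \<rho> by (metis power_int_add power_int_1_right)
  with \<mu> show ?thesis
    by blast
qed

lemma exists_not_in_F:
  assumes "alg_closed_field TYPE('c)"
  shows "\<exists>\<zeta>. \<zeta> \<notin> F"
proof -
  \<comment> \<open>A square root of \<pi> has absolute value strictly between |\<pi>| and 1.\<close>
  have "degree [:- \<pi>, 0, 1:] > 0"
    by simp
  then obtain z where "poly [:- \<pi>, 0, 1:] z = 0"
    using assms unfolding alg_closed_field_def by blast
  then have "z * z = \<pi>"
    by (simp add: algebra_simps)
  then have z0: "z \<noteq> 0" and zz: "av z * av z = av \<pi>"
    using \<pi>_nonzero av_mult[of z z] by auto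
  have "av z < 1"
  proof (rule ccontr)
    assume "\<not> av z < 1"
    then have "1 * 1 \<le> av z * av z"
      by (intro mult_mono) auto
    then show False
      using zz av_\<pi>_less_1 by simp
  qed
  have "z \<notin> F"
  proof
    assume "z \<in> F"
    then have "av z \<le> av z * av z"
      using av_less_1_le_\<pi> \<open>av z < 1\<close> zz by simp
    then show False
      using z0 \<open>av z < 1\<close> by simp
  qed
  then show ?thesis
    by blast
qed

end

section \<open>Matrices, the projective line and PGL_2\<close>

definition vec_P1 :: "'c::field vec2 \<Rightarrow> 'c P1" where
  "vec_P1 v = (if snd v = 0 then None else Some (fst v / snd v))"

definition vsmult :: "'c::field \<Rightarrow> 'c vec2 \<Rightarrow> 'c vec2" where
  "vsmult k v = (k * fst v, k * snd v)"

primrec mpow :: "'c::field mat2 \<Rightarrow> nat \<Rightarrow> 'c mat2" where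
  "mpow A 0 = (1, 0, 0, 1)"
| "mpow A (Suc n) = mmult A (mpow A n)"

lemma mobius_eq_vec_P1: "mobius A z = vec_P1 (mvec A (P1_vec z))"
  by (cases A; cases z) (auto simp: vec_P1_def)

lemma vec_P1_vsmult: "k \<noteq> 0 \<Longrightarrow> vec_P1 (vsmult k v) = vec_P1 v"
  by (auto simp: vec_P1_def vsmult_def)

lemma P1_vec_nonzero: "P1_vec z \<noteq> (0, 0)"
  by (cases z) auto

lemma P1_vec_vec_P1:
  assumes "v \<noteq> (0, 0)"
  shows "\<exists>k. k \<noteq> 0 \<and> (k = fst v \<or> k = snd v) \<and> v = vsmult k (P1_vec (vec_P1 v))"
proof (cases "snd v = 0")
  case True
  with assms show ?thesis
    by (intro exI[of _ "fst v"]) (cases v, auto simp: vec_P1_def vsmult_def)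
next
  case False
  then show ?thesis
    by (intro exI[of _ "snd v"]) (cases v, auto simp: vec_P1_def vsmult_def)
qed

lemma mvec_mmult: "mvec (mmult A B) v = mvec A (mvec B v)"
  by (cases A; cases B; cases v) (simp add: algebra_simps)

lemma mvec_vsmult: "mvec A (vsmult k v) = vsmult k (mvec A v)"
  by (cases A; cases v) (simp add: vsmult_def algebra_simps)

lemma mvec_msmult: "mvec (msmult k A) v = vsmult k (mvec A v)"
  by (cases A; cases v) (simp add: vsmult_def algebra_simps)

lemma mdet_mmult: "mdet (mmult A B) = mdet A * mdet B"
  by (cases A; cases B) (simp add: algebra_simps)

lemma mvec_nonzero:
  assumes "mdet A \<noteq> 0" "v \<noteq> (0, 0)"
  shows "mvec A v \<noteq> (0, 0)"
proof
  obtain a b c d where A: "A = (a, b, c, d)"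
    by (cases A)
  obtain x y where v: "v = (x, y)"
    by (cases v)
  assume "mvec A v = (0, 0)"
  then have e: "a * x + b * y = 0" "c * x + d * y = 0"
    using A v by auto
  have "(a * d - b * c) * x = d * (a * x + b * y) - b * (c * x + d * y)"
    "(a * d - b * c) * y = a * (c * x + d * y) - c * (a * x + b * y)"
    by (simp_all add: algebra_simps)
  then show False
    using e assms A v by simp
qed

lemma mobius_mmult:
  assumes "mdet B \<noteq> 0"
  shows "mobius (mmult A B) z = mobius A (mobius B z)"
proof -
  define v where "v = mvec B (P1_vec z)"
  have "v \<noteq> (0, 0)"
    unfolding v_def using mvec_nonzero[OF assms P1_vec_nonzero] .
  then obtain k where k: "k \<noteq> 0" "v = vsmult k (P1_vec (vec_P1 v))"
    using P1_vec_vec_P1 by blast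
  have "mobius A (mobius B z) = vec_P1 (vsmult k (mvec A (P1_vec (vec_P1 v))))"
    using k(1) by (simp add: mobius_eq_vec_P1 v_def vec_P1_vsmult)
  also have "\<dots> = vec_P1 (mvec A v)"
    using k(2) by (metis mvec_vsmult)
  finally show ?thesis
    by (simp add: mobius_eq_vec_P1 mvec_mmult v_def)
qed

lemma mobius_msmult: "k \<noteq> 0 \<Longrightarrow> mobius (msmult k A) z = mobius A z"
  by (simp add: mobius_eq_vec_P1 mvec_msmult vec_P1_vsmult)

lemma mmult_assoc: "mmult (mmult A B) C = mmult A (mmult B C)"
  by (cases A; cases B; cases C) (simp add: algebra_simps)

lemma mmult_id_left: "mmult (1, 0, 0, 1) A = A"
  by (cases A) simp

lemma mmult_msmult: "mmult (msmult s A) (msmult t B) = msmult (s * t) (mmult A B)"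
  by (cases A; cases B) (simp add: algebra_simps)

lemma mmult_msmult_right: "mmult A (msmult t B) = msmult t (mmult A B)"
  by (cases A; cases B) (simp add: algebra_simps)

lemma msmult_msmult: "msmult s (msmult t A) = msmult (s * t) A"
  by (cases A) (simp add: algebra_simps)

lemma mmult_minv_left:
  assumes "mdet A \<noteq> 0"
  shows "mmult (minv A) A = (1, 0, 0, 1)"
proof -
  obtain a b c d where A: "A = (a, b, c, d)"
    by (cases A)
  define e where "e = a * d - b * c"
  have e: "e \<noteq> 0"
    using assms A e_def by simp
  have "d / e * a + - b / e * c = e / e" "- c / e * b + a / e * d = e / e"
    unfolding e_def by (simp_all add: diff_divide_distrib[symmetric] algebra_simps)
  moreover have "d / e * b + - b / e * d = 0" "- c / e * a + a / e * c = 0"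
    by (simp_all add: field_simps)
  ultimately show ?thesis
    using A e by (simp add: Let_def e_def)
qed

lemma GL2_det: "A \<in> GL2 F \<Longrightarrow> mdet A \<noteq> 0"
  by (cases A) (simp add: GL2_def)

lemma GL2_id: "subfield F \<Longrightarrow> (1, 0, 0, 1) \<in> GL2 F"
  by (simp add: GL2_def subfield_0 subfield_1)

lemma mmult_GL2:
  assumes "subfield F" "A \<in> GL2 F" "B \<in> GL2 F"
  shows "mmult A B \<in> GL2 F"
proof -
  have "mdet (mmult A B) \<noteq> 0"
    using mdet_mmult[of A B] GL2_det[OF assms(2)] GL2_det[OF assms(3)] by simp
  then show ?thesis
    using assms by (cases A; cases B) (simp add: GL2_def subfield_add subfield_mult algebra_simps)
qed

lemma msmult_GL2:
  assumes "subfield F" "A \<in> GL2 F" "t \<in> F" "t \<noteq> 0"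
  shows "msmult t A \<in> GL2 F"
proof -
  have "mdet (msmult t A) = t * t * mdet A"
    by (cases A) (simp add: algebra_simps)
  then show ?thesis
    using assms GL2_det[of A F] by (cases A) (simp add: GL2_def subfield_mult)
qed

lemma mclass_self: "subfield F \<Longrightarrow> A \<in> mclass F A"
  unfolding mclass_def by (rule CollectI, rule exI[of _ 1]) (cases A, simp add: subfield_1)

lemma mclass_eq:
  assumes F: "subfield F" and A: "A \<in> GL2 F" and X: "X \<in> mclass F A"
  shows "X \<in> GL2 F \<and> mclass F X = mclass F A"
proof -
  obtain t where t: "t \<in> F" "t \<noteq> 0" "X = msmult t A"
    using X by (auto simp: mclass_def)
  have "mclass F A \<subseteq> mclass F X"
  proof
    fix Y
    assume "Y \<in> mclass F A"
    then obtain r where r: "r \<in> F" "r \<noteq> 0" "Y = msmult r A"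
      by (auto simp: mclass_def)
    then have "Y = msmult (r / t) X" "r / t \<in> F" "r / t \<noteq> 0"
      using t F by (simp_all add: msmult_msmult subfield_divide)
    then show "Y \<in> mclass F X"
      unfolding mclass_def by blast
  qed
  moreover have "mclass F X \<subseteq> mclass F A"
    unfolding mclass_def t(3) using F t by (auto simp: msmult_msmult subfield_mult)
  ultimately show ?thesis
    using msmult_GL2[OF F A t(1,2)] t(3) by blast
qed

lemma mclass_mmult:
  assumes "subfield F"
  shows "{mmult X Y | X Y. X \<in> mclass F A \<and> Y \<in> mclass F B} = mclass F (mmult A B)"
proof
  show "{mmult X Y | X Y. X \<in> mclass F A \<and> Y \<in> mclass F B} \<subseteq> mclass F (mmult A B)"
  proof
    fix Z
    assume "Z \<in> {mmult X Y | X Y. X \<in> mclass F A \<and> Y \<in> mclass F B}"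
    then obtain s t where "s \<in> F" "s \<noteq> 0" "t \<in> F" "t \<noteq> 0" "Z = mmult (msmult s A) (msmult t B)"
      unfolding mclass_def by blast
    then show "Z \<in> mclass F (mmult A B)"
      using assms unfolding mclass_def by (auto simp: mmult_msmult intro: subfield_mult)
  qed
  show "mclass F (mmult A B) \<subseteq> {mmult X Y | X Y. X \<in> mclass F A \<and> Y \<in> mclass F B}"
  proof
    fix Z
    assume "Z \<in> mclass F (mmult A B)"
    then obtain t where t: "t \<in> F" "t \<noteq> 0" "Z = mmult (msmult t A) (msmult 1 B)"
      by (auto simp: mclass_def mmult_msmult)
    moreover have "msmult t A \<in> mclass F A" "msmult 1 B \<in> mclass F B"
      using t assms by (auto simp: mclass_def subfield_1)
    ultimately show "Z \<in> {mmult X Y | X Y. X \<in> mclass F A \<and> Y \<in> mclass F B}"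
      by blast
  qed
qed

definition pgl_rep :: "'c::field mat2 set \<Rightarrow> 'c mat2" where
  "pgl_rep g = (SOME A. A \<in> g)"

lemma pgl_act_eq_mobius: "pgl_act g = mobius (pgl_rep g)"
  by (simp add: fun_eq_iff pgl_act_def pgl_rep_def)

lemma pgl_rep_mclass:
  assumes "subfield F" "A \<in> GL2 F"
  shows "pgl_rep (mclass F A) \<in> GL2 F \<and> mclass F (pgl_rep (mclass F A)) = mclass F A"
proof -
  have "pgl_rep (mclass F A) \<in> mclass F A"
    unfolding pgl_rep_def using mclass_self[OF assms(1)] by (rule someI)
  then show ?thesis
    using mclass_eq[OF assms] by blast
qed

lemma pgl_rep_PGL2_S:
  assumes "g \<in> PGL2_S S F" "s \<in> S" "subfield (F s)"
  shows "pgl_rep (g s) \<in> GL2 (F s) \<and> mclass (F s) (pgl_rep (g s)) = g s"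
proof -
  obtain A where "A \<in> GL2 (F s)" "g s = mclass (F s) A"
    using assms(1,2) by (auto simp: PGL2_S_def)
  then show ?thesis
    using pgl_rep_mclass[OF assms(3)] by simp
qed

lemma mobius_mclass:
  assumes "X \<in> mclass F A"
  shows "mobius X = mobius A"
  using assms by (auto simp: mclass_def fun_eq_iff mobius_msmult)

lemma pgl_mult_apply:
  assumes "g \<in> PGL2_S S F" "h \<in> PGL2_S S F" "s \<in> S" "subfield (F s)"
  shows "pgl_mult g h s = mclass (F s) (mmult (pgl_rep (g s)) (pgl_rep (h s)))"
  using mclass_mmult[OF assms(4), of "pgl_rep (g s)" "pgl_rep (h s)"]
    pgl_rep_PGL2_S[OF assms(1,3,4)] pgl_rep_PGL2_S[OF assms(2,3,4)] by (simp add: pgl_mult_def)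

lemma pgl_act_pgl_mult:
  assumes "g \<in> PGL2_S S F" "h \<in> PGL2_S S F" "s \<in> S" "subfield (F s)"
  shows "pgl_act (pgl_mult g h s) z = pgl_act (g s) (pgl_act (h s) z)"
proof -
  let ?A = "pgl_rep (g s)" and ?B = "pgl_rep (h s)"
  have "?B \<in> GL2 (F s)"
    using pgl_rep_PGL2_S[OF assms(2-4)] by blast
  have "pgl_rep (pgl_mult g h s) \<in> mclass (F s) (mmult ?A ?B)"
    unfolding pgl_mult_apply[OF assms] pgl_rep_def by (rule someI, rule mclass_self[OF assms(4)])
  then have "pgl_act (pgl_mult g h s) z = mobius (mmult ?A ?B) z"
    by (simp add: pgl_act_eq_mobius mobius_mclass)
  also have "\<dots> = mobius ?A (mobius ?B z)"
    using mobius_mmult GL2_det[OF \<open>?B \<in> GL2 (F s)\<close>] by blast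
  finally show ?thesis
    by (simp add: pgl_act_eq_mobius)
qed

lemma pgl_mult_left_cancel:
  assumes g: "g \<in> PGL2_S S F" and h: "h \<in> PGL2_S S F" and h': "h' \<in> PGL2_S S F"
    and F: "\<forall>s\<in>S. subfield (F s)" and eq: "pgl_mult g h = pgl_mult g h'"
  shows "h = h'"
proof
  fix s
  show "h s = h' s"
  proof (cases "s \<in> S")
    case False
    then show ?thesis
      using h h' by (simp add: PGL2_S_def)
  next
    case s: True
    have Fs: "subfield (F s)"
      using F s by simp
    obtain A B B' where AB: "pgl_rep (g s) = A" "pgl_rep (h s) = B" "pgl_rep (h' s) = B'"
      by blast
    have A: "A \<in> GL2 (F s)" and B: "B \<in> GL2 (F s)" "mclass (F s) B = h s"
      and B': "mclass (F s) B' = h' s"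
      using pgl_rep_PGL2_S[OF g s Fs] pgl_rep_PGL2_S[OF h s Fs] pgl_rep_PGL2_S[OF h' s Fs] AB
      by auto
    have "mclass (F s) (mmult A B') = mclass (F s) (mmult A B)"
      using pgl_mult_apply[OF g h s Fs] pgl_mult_apply[OF g h' s Fs] eq AB by simp
    then have "mmult A B' \<in> mclass (F s) (mmult A B)"
      using mclass_self[OF Fs] by blast
    then obtain t where t: "t \<in> F s" "t \<noteq> 0" "mmult A B' = msmult t (mmult A B)"
      unfolding mclass_def by blast
    have inv: "mmult (minv A) A = (1, 0, 0, 1)"
      using mmult_minv_left[OF GL2_det[OF A]] .
    have "B' = mmult (minv A) (mmult A B')"
      by (simp only: mmult_assoc[symmetric] inv mmult_id_left)
    also have "\<dots> = msmult t B"
      by (simp only: t(3) mmult_msmult_right mmult_assoc[symmetric] inv mmult_id_left)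
    finally have "B' \<in> mclass (F s) B"
      using t unfolding mclass_def by blast
    then show ?thesis
      using mclass_eq[OF Fs B(1)] B B' by simp
  qed
qed

lemma pgl_pow_apply:
  assumes "g \<in> PGL2_S S F" "s \<in> S" "subfield (F s)"
  shows "pgl_pow S F g n s = mclass (F s) (mpow (pgl_rep (g s)) n) \<and> mpow (pgl_rep (g s)) n \<in> GL2 (F s)"
proof (induction n)
  case 0
  then show ?case
    using assms(2) GL2_id[OF assms(3)] by (simp add: pgl_one_def)
next
  case (Suc n)
  have A: "pgl_rep (g s) \<in> GL2 (F s)" "mclass (F s) (pgl_rep (g s)) = g s"
    using pgl_rep_PGL2_S[OF assms] by auto
  have "pgl_pow S F g (Suc n) s = {mmult X Y | X Y. X \<in> g s \<and> Y \<in> pgl_pow S F g n s}"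
    by (simp add: pgl_mult_def)
  then show ?case
    using mclass_mmult[OF assms(3), of "pgl_rep (g s)"] mmult_GL2[OF assms(3) A(1)] Suc A(2) by simp
qed

lemma finite_order_mpow_scalar:
  assumes "g \<in> PGL2_S S F" "s \<in> S" "subfield (F s)" "finite_order S F g"
  shows "\<exists>n c. n > 0 \<and> mpow (pgl_rep (g s)) n = (c, 0, 0, c)"
proof -
  obtain n where n: "n > 0" "pgl_pow S F g n = pgl_one S F"
    using assms(4) by (auto simp: finite_order_def)
  have "mpow (pgl_rep (g s)) n \<in> pgl_pow S F g n s"
    using pgl_pow_apply[OF assms(1-3)] mclass_self[OF assms(3)] by simp
  then have "mpow (pgl_rep (g s)) n \<in> mclass (F s) (1, 0, 0, 1)"
    using n(2) assms(2) by (simp add: pgl_one_def)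
  then show ?thesis
    using n(1) by (auto simp: mclass_def)
qed

section \<open>Continuity of Moebius transformations\<close>

context nonarch_valued
begin

definition P1_near :: "'c P1 \<Rightarrow> real \<Rightarrow> 'c P1 \<Rightarrow> bool" where
  "P1_near x e y \<longleftrightarrow> (case x of
      Some a \<Rightarrow> (\<exists>z. y = Some z \<and> av (z - a) < e)
    | None \<Rightarrow> y = None \<or> (\<exists>z. y = Some z \<and> inverse e < av z))"

lemma P1_conv_iff_near: "P1_conv av X x \<longleftrightarrow> (\<forall>e>0. eventually (\<lambda>n. P1_near x e (X n)) sequentially)"
proof (cases x)
  case None
  have "P1_conv av X None" if "\<forall>e>0. eventually (\<lambda>n. P1_near None e (X n)) sequentially"
  proof -
    have "eventually (\<lambda>n. X n = None \<or> (\<exists>z. X n = Some z \<and> M < av z)) sequentially" for M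
    proof -
      have "eventually (\<lambda>n. P1_near None (inverse (max M 1)) (X n)) sequentially"
        using that by simp
      then show ?thesis
        by (rule eventually_mono) (auto simp: P1_near_def)
    qed
    then show ?thesis
      by (simp add: P1_conv_def)
  qed
  then show ?thesis
    using None by (auto simp: P1_conv_def P1_near_def)
qed (simp add: P1_conv_def P1_near_def)

definition continuous_mobius :: "'c mat2 \<Rightarrow> bool" where
  "continuous_mobius M \<longleftrightarrow>
     (\<forall>X x. P1_conv av X x \<longrightarrow> P1_conv av (\<lambda>n. mobius M (X n)) (mobius M x))"

lemma continuous_mobiusI:
  assumes "\<And>x e. e > 0 \<Longrightarrow> \<exists>d>0. \<forall>y. P1_near x d y \<longrightarrow> P1_near (mobius M x) e (mobius M y)"
  shows "continuous_mobius M"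
  unfolding continuous_mobius_def P1_conv_iff_near
proof (intro allI impI)
  fix X x and e :: real
  assume X: "\<forall>d>0. eventually (\<lambda>n. P1_near x d (X n)) sequentially" and "e > 0"
  then obtain d where "d > 0" "\<forall>y. P1_near x d y \<longrightarrow> P1_near (mobius M x) e (mobius M y)"
    using assms by blast
  then show "eventually (\<lambda>n. P1_near (mobius M x) e (mobius M (X n))) sequentially"
    using X by (auto elim!: eventually_mono)
qed

lemma continuous_mobius_mmult:
  "mdet B \<noteq> 0 \<Longrightarrow> continuous_mobius A \<Longrightarrow> continuous_mobius B \<Longrightarrow> continuous_mobius (mmult A B)"
  unfolding continuous_mobius_def by (simp add: mobius_mmult)

lemma continuous_mobius_msmult: "k \<noteq> 0 \<Longrightarrow> continuous_mobius A \<Longrightarrow> continuous_mobius (msmult k A)"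
  unfolding continuous_mobius_def by (simp add: mobius_msmult)

lemma continuous_mobius_translation: "continuous_mobius (1, b, 0, 1)"
proof (rule continuous_mobiusI)
  fix x and e :: real
  assume e: "e > 0"
  show "\<exists>d>0. \<forall>y. P1_near x d y \<longrightarrow> P1_near (mobius (1, b, 0, 1) x) e (mobius (1, b, 0, 1) y)"
  proof (cases x)
    case None
    define d where "d = inverse (max (inverse e) (av b) + 1)"
    have "0 \<le> max (inverse e) (av b)"
      by (simp add: le_max_iff_disj)
    then have "d > 0"
      by (simp add: d_def)
    have "av (z + b) = av z" if "inverse d < av z" for z
      using that av_add_eq_left[of b z] by (simp add: d_def)
    then have "\<forall>y. P1_near x d y \<longrightarrow> P1_near (mobius (1, b, 0, 1) x) e (mobius (1, b, 0, 1) y)"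
      using None by (auto simp: P1_near_def d_def)
    with \<open>d > 0\<close> show ?thesis
      by blast
  qed (use e in \<open>auto simp: P1_near_def algebra_simps\<close>)
qed

lemma continuous_mobius_scaling:
  assumes k: "k \<noteq> 0"
  shows "continuous_mobius (k, 0, 0, 1)"
proof (rule continuous_mobiusI)
  fix x and e :: real
  assume e: "e > 0"
  have ak: "av k > 0"
    using k by simp
  show "\<exists>d>0. \<forall>y. P1_near x d y \<longrightarrow> P1_near (mobius (k, 0, 0, 1) x) e (mobius (k, 0, 0, 1) y)"
  proof (cases x)
    case None
    show ?thesis
      using e ak None
      by (intro exI[of _ "e * av k"]) (auto simp: P1_near_def field_simps)
  next
    case (Some a)
    have "av (k * z - k * a) = av k * av (z - a)" for z
      by (simp flip: right_diff_distrib)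
    then show ?thesis
      using e ak Some
      by (intro exI[of _ "e / av k"]) (auto simp: P1_near_def field_simps)
  qed
qed

lemma mobius_inversion_Some: "mobius (0, 1, 1, 0) (Some z) = (if z = 0 then None else Some (inverse z))"
  by (simp add: divide_inverse)

lemma continuous_mobius_inversion: "continuous_mobius (0, 1, 1, 0)"
proof (rule continuous_mobiusI)
  fix x and e :: real
  assume e: "e > 0"
  show "\<exists>d>0. \<forall>y. P1_near x d y \<longrightarrow> P1_near (mobius (0, 1, 1, 0) x) e (mobius (0, 1, 1, 0) y)"
  proof (cases x)
    case None
    have "av (inverse z) < e" if "inverse e < av z" for z
      using that e by (simp add: inverse_less_imp_less)
    then show ?thesis
      using e None
      by (intro exI[of _ e]) (auto simp: P1_near_def divide_inverse)
  next
    case (Some a)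
    show ?thesis
    proof (cases "a = 0")
      case True
      have "P1_near None e (mobius (0, 1, 1, 0) y)" if near: "P1_near (Some 0) e y" for y
      proof -
        obtain z where "y = Some z" "av z < e"
          using near by (auto simp: P1_near_def)
        then show ?thesis
          by (cases "z = 0")
            (auto simp: P1_near_def mobius_inversion_Some less_imp_inverse_less simp del: mobius.simps)
      qed
      then show ?thesis
        using e Some True by (intro exI[of _ e]) simp
    next
      case False
      define d where "d = min (av a) (e * av a * av a)"
      have "av (inverse z - inverse a) < e" "z \<noteq> 0" if z: "av (z - a) < d" for z
      proof -
        have "av z = av a"
          using z av_add_eq_left[of "z - a" a] by (simp add: d_def)
        then show "z \<noteq> 0"
          using False by auto
        have "inverse z - inverse a = (a - z) / (z * a)"
          using \<open>z \<noteq> 0\<close> False by (simp add: field_simps)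
        then have "av (inverse z - inverse a) = av (z - a) / (av a * av a)"
          using \<open>av z = av a\<close> av_diff_commute[of a z] by simp
        also have "\<dots> < e"
          using z False by (simp add: d_def pos_divide_less_eq mult.assoc)
        finally show "av (inverse z - inverse a) < e" .
      qed
      moreover have "d > 0"
        using e False by (simp add: d_def)
      ultimately show ?thesis
        using Some False
        by (intro exI[of _ d]) (auto simp: P1_near_def mobius_inversion_Some simp del: mobius.simps)
    qed
  qed
qed

text \<open>Every Moebius transformation is a composite of translations, scalings and the inversion.\<close>

lemma continuous_mobius:
  assumes det: "mdet M \<noteq> 0"
  shows "continuous_mobius M"
proof -
  obtain a b c d where M: "M = (a, b, c, d)"
    by (cases M)
  have D: "a * d - b * c \<noteq> 0"
    using det M by simp
  note building_blocks = continuous_mobius_mmult continuous_mobius_translation continuous_mobius_scaling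
  show ?thesis
  proof (cases "c = 0")
    case True
    then have "d \<noteq> 0" "a \<noteq> 0"
      using D by auto
    then have "continuous_mobius (msmult d (mmult (1, b / d, 0, 1) (a / d, 0, 0, 1)))"
      by (intro continuous_mobius_msmult building_blocks) auto
    then show ?thesis
      using M True \<open>d \<noteq> 0\<close> by simp
  next
    case False
    define e where "e = - (a * d - b * c) / c"
    have "e \<noteq> 0"
      using D False by (simp add: e_def)
    then have "continuous_mobius
        (mmult (1, a / c, 0, 1) (mmult (e, 0, 0, 1) (mmult (0, 1, 1, 0) (mmult (1, d, 0, 1) (c, 0, 0, 1)))))"
      using False by (intro building_blocks continuous_mobius_inversion) auto
    moreover have "mmult (1, a / c, 0, 1) (mmult (e, 0, 0, 1) (mmult (0, 1, 1, 0) (mmult (1, d, 0, 1) (c, 0, 0, 1)))) = M"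
      using M False by (simp add: e_def field_simps)
    ultimately show ?thesis
      by simp
  qed
qed

end

section \<open>Invariance of the limit set\<close>

lemma mobius_notin_P1_of:
  assumes F: "subfield F" and A: "A \<in> GL2 F" and z: "\<zeta> \<notin> F"
  shows "mobius A (Some \<zeta>) \<notin> P1_of F"
proof
  obtain a b c d where A_eq: "A = (a, b, c, d)"
    by (cases A)
  have abcd: "a \<in> F" "b \<in> F" "c \<in> F" "d \<in> F" and D: "a * d - b * c \<noteq> 0"
    using A A_eq by (auto simp: GL2_def)
  assume "mobius A (Some \<zeta>) \<in> P1_of F"
  then consider "c * \<zeta> + d = 0" | y where "y \<in> F" "c * \<zeta> + d \<noteq> 0" "y = (a * \<zeta> + b) / (c * \<zeta> + d)"
    using A_eq by (auto simp: P1_of_def split: if_splits)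
  then have "\<zeta> \<in> F"
  proof cases
    case 1
    moreover from 1 have "c \<noteq> 0"
      using D by auto
    ultimately have "\<zeta> = - d / c"
      by (simp add: field_simps add_eq_0_iff)
    then show ?thesis
      using F abcd by (simp add: subfield_divide subfield_minus)
  next
    case (2 y)
    then have "\<zeta> * (c * y - a) = b - d * y"
      by (simp add: field_simps)
    moreover have "c * y - a \<noteq> 0"
      using D \<open>\<zeta> * (c * y - a) = b - d * y\<close> by (auto simp: algebra_simps)
    ultimately have "\<zeta> = (b - d * y) / (c * y - a)"
      by (simp add: field_simps)
    then show ?thesis
      using F abcd \<open>y \<in> F\<close> by (simp add: subfield_divide subfield_diff subfield_mult)
  qed
  with z show False ..
qed

context nonarch_valued
begin

lemma local_field_discretely_valued:
  assumes "local_field av F"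
  obtains \<pi> where "discretely_valued_subfield av F \<pi>"
  using assms nonarch_abs
  by (auto simp: local_field_def discretely_valued_subfield_def valued_subfield_def
      discretely_valued_subfield_axioms_def valued_subfield_axioms_def nonarch_valued_def)

lemma limit_set_pgl_act:
  assumes F: "\<forall>s\<in>S. subfield (F s)" and sub: "pgl_subgroup S F \<Gamma>"
    and g: "g \<in> \<Gamma>" and x: "x \<in> limit_set av S \<Gamma>"
  shows "(\<lambda>s. if s \<in> S then pgl_act (g s) (x s) else None) \<in> limit_set av S \<Gamma>"
proof -
  obtain y \<delta> where y: "y \<in> PS S" and inj: "inj \<delta>" and \<delta>: "range \<delta> \<subseteq> \<Gamma>"
    and conv: "\<forall>s\<in>S. P1_conv av (\<lambda>j. pgl_act (\<delta> j s) (y s)) (x s)"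
    using x unfolding limit_set_def by blast
  have \<Gamma>: "\<Gamma> \<subseteq> PGL2_S S F"
    using sub by (simp add: pgl_subgroup_def)
  then have gP: "g \<in> PGL2_S S F" and \<delta>P: "\<And>j. \<delta> j \<in> PGL2_S S F"
    using g \<delta> by auto
  define \<delta>' where "\<delta>' = (\<lambda>j. pgl_mult g (\<delta> j))"
  have "inj \<delta>'"
    using inj pgl_mult_left_cancel[OF gP \<delta>P \<delta>P F] by (auto simp: inj_def \<delta>'_def)
  moreover have "range \<delta>' \<subseteq> \<Gamma>"
    using sub g \<delta> unfolding \<delta>'_def pgl_subgroup_def by auto
  moreover have "P1_conv av (\<lambda>j. pgl_act (\<delta>' j s) (y s)) (pgl_act (g s) (x s))" if s: "s \<in> S" for s
  proof -
    have "pgl_rep (g s) \<in> GL2 (F s)"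
      using pgl_rep_PGL2_S[OF gP s] F s by blast
    then have "continuous_mobius (pgl_rep (g s))"
      using continuous_mobius GL2_det by blast
    then show ?thesis
      using conv s F pgl_act_pgl_mult[OF gP \<delta>P s]
      by (simp add: continuous_mobius_def \<delta>'_def pgl_act_eq_mobius)
  qed
  ultimately show ?thesis
    using y unfolding limit_set_def PS_def by (simp, blast)
qed

lemma limit_component_invariant:
  assumes ac: "alg_closed_field TYPE('c)" and loc: "\<forall>s\<in>S. local_field av (F s)"
    and sub: "pgl_subgroup S F \<Gamma>" and pl: "plectic_semisimple_with av S F \<Gamma> Lp"
    and g: "g \<in> \<Gamma>" and s: "s \<in> S" and l: "l \<in> Lp s"
  shows "pgl_act (g s) l \<in> Lp s"
proof -
  have F: "\<forall>t\<in>S. subfield (F t)"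
    using loc by (simp add: local_field_def)
  have "\<exists>\<zeta>. \<zeta> \<notin> F t" if "t \<in> S" for t
    using local_field_discretely_valued[of "F t"] discretely_valued_subfield.exists_not_in_F[OF _ ac]
      loc that by metis
  then obtain \<zeta> where \<zeta>: "\<And>t. t \<in> S \<Longrightarrow> \<zeta> t \<notin> F t"
    by metis
  have LS: "limit_set av S \<Gamma> = {x \<in> PS S. \<exists>t\<in>S. x t \<in> Lp t}"
    and Lp: "\<forall>t\<in>S. Lp t \<subseteq> P1_of (F t)"
    using pl by (simp_all add: plectic_semisimple_with_def)
  define x where "x = (\<lambda>t. if t = s then l else if t \<in> S then Some (\<zeta> t) else None)"
  have "x \<in> limit_set av S \<Gamma>"
    unfolding LS using s l by (auto simp: x_def PS_def)
  then have "(\<lambda>t. if t \<in> S then pgl_act (g t) (x t) else None) \<in> limit_set av S \<Gamma>"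
    by (rule limit_set_pgl_act[OF F sub g])
  then obtain t where t: "t \<in> S" "pgl_act (g t) (x t) \<in> Lp t"
    unfolding LS by auto
  have "t = s"
  proof (rule ccontr)
    assume "t \<noteq> s"
    have "pgl_rep (g t) \<in> GL2 (F t)"
      using pgl_rep_PGL2_S[of g S F t] sub g t(1) F by (auto simp: pgl_subgroup_def)
    then have "pgl_act (g t) (x t) \<notin> P1_of (F t)"
      using mobius_notin_P1_of[of "F t", OF _ _ \<zeta>] F t(1) \<open>t \<noteq> s\<close>
      by (simp add: x_def pgl_act_eq_mobius)
    then show False
      using t Lp by blast
  qed
  then show ?thesis
    using t by (simp add: x_def)
qed

end

section \<open>Lattices and apartments of the Bruhat--Tits tree\<close>

definition lincomb :: "'c::field \<Rightarrow> 'c vec2 \<Rightarrow> 'c \<Rightarrow> 'c vec2 \<Rightarrow> 'c vec2" where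
  "lincomb a u b w = (a * fst u + b * fst w, a * snd u + b * snd w)"

definition vdet :: "'c::field vec2 \<Rightarrow> 'c vec2 \<Rightarrow> 'c" where
  "vdet u w = fst u * snd w - snd u * fst w"

definition vec_in :: "'c set \<Rightarrow> 'c vec2 \<Rightarrow> bool" where
  "vec_in F v \<longleftrightarrow> fst v \<in> F \<and> snd v \<in> F"

definition vertex_act :: "'c::field mat2 \<Rightarrow> 'c vec2 set set \<Rightarrow> 'c vec2 set set" where
  "vertex_act A v = (\<lambda>L. mvec A ` L) ` v"

lemma pgl_act_vertex_eq_vertex_act: "pgl_act_vertex g = vertex_act (pgl_rep g)"
  by (simp add: fun_eq_iff pgl_act_vertex_def vertex_act_def pgl_rep_def)

lemma lincomb_lincomb:
  "lincomb a (lincomb a1 x c1 y) b (lincomb b1 x d1 y) = lincomb (a * a1 + b * b1) x (a * c1 + b * d1) y"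
  by (simp add: lincomb_def algebra_simps)

lemma mvec_lincomb: "mvec A (lincomb a u b w) = lincomb a (mvec A u) b (mvec A w)"
  by (cases A; cases u; cases w) (simp add: lincomb_def algebra_simps)

lemma vdet_vsmult: "vdet u (vsmult t w) = t * vdet u w"
  by (simp add: vdet_def vsmult_def algebra_simps)

lemma lincomb_eq_0_iff:
  assumes "vdet u w \<noteq> 0"
  shows "lincomb a u b w = (0, 0) \<longleftrightarrow> a = 0 \<and> b = 0"
proof
  obtain u1 u2 w1 w2 where u: "u = (u1, u2)" and w: "w = (w1, w2)"
    by (cases u; cases w)
  assume "lincomb a u b w = (0, 0)"
  then have e: "a * u1 + b * w1 = 0" "a * u2 + b * w2 = 0"
    using u w by (simp_all add: lincomb_def)
  have "a * vdet u w = w2 * (a * u1 + b * w1) - w1 * (a * u2 + b * w2)"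
    "b * vdet u w = u1 * (a * u2 + b * w2) - u2 * (a * u1 + b * w1)"
    using u w by (simp_all add: vdet_def algebra_simps)
  then have "a * vdet u w = 0" "b * vdet u w = 0"
    by (simp_all only: e) simp_all
  then show "a = 0 \<and> b = 0"
    using assms by simp
qed (simp add: lincomb_def)

lemma lincomb_inj:
  assumes "vdet u w \<noteq> 0" "lincomb a u b w = lincomb a' u b' w"
  shows "a = a' \<and> b = b'"
proof -
  have "lincomb (a - a') u (b - b') w = (0, 0)"
    using assms(2) by (simp add: lincomb_def algebra_simps prod_eq_iff)
  then show ?thesis
    using lincomb_eq_0_iff[OF assms(1)] by simp
qed

lemma lincomb_divide: "lincomb (a / e) u (b / e) w = vsmult (inverse e) (lincomb a u b w)"
  by (simp add: lincomb_def vsmult_def divide_inverse algebra_simps)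

lemma vsmult_inverse_vsmult: "e \<noteq> 0 \<Longrightarrow> vsmult (inverse e) (vsmult e v) = v"
  by (simp add: vsmult_def mult.assoc[symmetric])

lemma lincomb_coordinates:
  assumes "vdet u w \<noteq> 0"
  shows "v = lincomb (vdet v w / vdet u w) u (vdet u v / vdet u w) w"
proof -
  have "lincomb (vdet v w) u (vdet u v) w = vsmult (vdet u w) v"
    by (simp add: lincomb_def vsmult_def vdet_def algebra_simps)
  then show ?thesis
    using assms by (simp add: lincomb_divide vsmult_inverse_vsmult)
qed

lemma P1_vec_vdet: "l1 \<noteq> l2 \<Longrightarrow> vdet (P1_vec l1) (P1_vec l2) \<noteq> 0"
  by (cases l1; cases l2) (auto simp: vdet_def)

lemma P1_vec_in: "subfield F \<Longrightarrow> l \<in> P1_of F \<Longrightarrow> vec_in F (P1_vec l)"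
  by (auto simp: P1_of_def vec_in_def subfield_0 subfield_1)

lemma mvec_in: "subfield F \<Longrightarrow> A \<in> GL2 F \<Longrightarrow> vec_in F v \<Longrightarrow> vec_in F (mvec A v)"
  by (cases A; cases v) (auto simp: GL2_def vec_in_def subfield_add subfield_mult)

lemma vsmult_in: "subfield F \<Longrightarrow> t \<in> F \<Longrightarrow> vec_in F w \<Longrightarrow> vec_in F (vsmult t w)"
  by (simp add: vec_in_def vsmult_def subfield_mult)

lemma lincomb_coordinates_in:
  assumes "subfield F" "vec_in F u" "vec_in F w" "vec_in F v" "vdet u w \<noteq> 0"
  shows "\<exists>r s. r \<in> F \<and> s \<in> F \<and> v = lincomb r u s w"
proof -
  have "vdet x y \<in> F" if "vec_in F x" "vec_in F y" for x y
    using assms(1) that by (simp add: vdet_def vec_in_def subfield_diff subfield_mult)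
  then show ?thesis
    using lincomb_coordinates[OF assms(5), of v] assms by (meson subfield_divide)
qed

lemma mvec_P1_vec:
  assumes F: "subfield F" and A: "A \<in> GL2 F" and l: "l \<in> P1_of F"
  shows "\<exists>k\<in>F. k \<noteq> 0 \<and> mvec A (P1_vec l) = vsmult k (P1_vec (mobius A l))"
proof -
  have "mvec A (P1_vec l) \<noteq> (0, 0)"
    using mvec_nonzero[OF GL2_det[OF A] P1_vec_nonzero] .
  then obtain k where k: "k \<noteq> 0" "k = fst (mvec A (P1_vec l)) \<or> k = snd (mvec A (P1_vec l))"
    "mvec A (P1_vec l) = vsmult k (P1_vec (mobius A l))"
    unfolding mobius_eq_vec_P1 using P1_vec_vec_P1 by blast
  moreover have "vec_in F (mvec A (P1_vec l))"
    using mvec_in[OF F A P1_vec_in[OF F l]] .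
  ultimately show ?thesis
    unfolding vec_in_def by auto
qed

lemma hclass_self:
  assumes "subfield F"
  shows "L \<in> hclass F L"
proof -
  have "vscale 1 L = L"
    unfolding vscale_def by (simp add: case_prod_unfold)
  then show ?thesis
    unfolding hclass_def using subfield_1[OF assms] by force
qed

lemma vscale_vscale: "vscale s (vscale t L) = vscale (s * t) L"
  unfolding vscale_def image_image by (simp add: case_prod_unfold algebra_simps)

lemma hclass_vscale:
  assumes F: "subfield F" and l: "l \<in> F" "l \<noteq> 0"
  shows "hclass F (vscale l L) = hclass F L"
proof
  show "hclass F (vscale l L) \<subseteq> hclass F L"
    unfolding hclass_def using F l by (auto simp: vscale_vscale subfield_mult)
  show "hclass F L \<subseteq> hclass F (vscale l L)"
  proof
    fix M
    assume "M \<in> hclass F L"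
    then obtain t where t: "t \<in> F" "t \<noteq> 0" "M = vscale t L"
      by (auto simp: hclass_def)
    then have "M = vscale (t / l) (vscale l L)" "t / l \<in> F" "t / l \<noteq> 0"
      using l F by (simp_all add: vscale_vscale subfield_divide)
    then show "M \<in> hclass F (vscale l L)"
      unfolding hclass_def by blast
  qed
qed

lemma image_mvec_vscale: "mvec A ` vscale t L = vscale t (mvec A ` L)"
proof -
  have "mvec A ((\<lambda>(x, y). (t * x, t * y)) v) = (\<lambda>(x, y). (t * x, t * y)) (mvec A v)" for v
    by (cases A; cases v) (simp add: algebra_simps)
  then show ?thesis
    unfolding vscale_def image_image by simp
qed

lemma vertex_act_hclass: "vertex_act A (hclass F L) = hclass F (mvec A ` L)"
proof -
  have "(\<lambda>L. mvec A ` L) ` {vscale t L | t. t \<in> F \<and> t \<noteq> 0} = {mvec A ` vscale t L | t. t \<in> F \<and> t \<noteq> 0}"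
    by blast
  then show ?thesis
    by (simp add: vertex_act_def hclass_def image_mvec_vscale)
qed

context valued_subfield
begin

lemma valring_0: "0 \<in> valring av F" and valring_1: "1 \<in> valring av F"
  by (simp_all add: valring_iff F_0 F_1)

lemma lattice_span_eq: "lattice_span av F u w = {lincomb a u b w | a b. a \<in> valring av F \<and> b \<in> valring av F}"
  by (simp add: lattice_span_def lincomb_def)

lemma lattice_span_commute: "lattice_span av F u w = lattice_span av F w u"
  unfolding lattice_span_def by (metis (no_types, lifting) add.commute)

lemma lincomb_in_lattice_span:
  "a \<in> valring av F \<Longrightarrow> b \<in> valring av F \<Longrightarrow> lincomb a u b w \<in> lattice_span av F u w"
  by (auto simp: lattice_span_eq)

lemma is_lattice_lattice_span:
  "vec_in F u \<Longrightarrow> vec_in F w \<Longrightarrow> vdet u w \<noteq> 0 \<Longrightarrow> is_lattice av F (lattice_span av F u w)"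
  unfolding is_lattice_def vec_in_def vdet_def by blast

lemma lattice_span_subset:
  assumes "x' = lincomb a x c y" "y' = lincomb b x d y"
    and "a \<in> valring av F" "b \<in> valring av F" "c \<in> valring av F" "d \<in> valring av F"
  shows "lattice_span av F x' y' \<subseteq> lattice_span av F x y"
proof
  fix z
  assume "z \<in> lattice_span av F x' y'"
  then obtain a' b' where "a' \<in> valring av F" "b' \<in> valring av F" "z = lincomb a' x' b' y'"
    by (auto simp: lattice_span_eq)
  then show "z \<in> lattice_span av F x y"
    using assms by (auto simp: lincomb_lincomb lattice_span_eq intro!: valring_add valring_mult)
qed

lemma lattice_span_change_basis:
  assumes x': "x' = lincomb a x c y" and y': "y' = lincomb b x d y"
    and O: "a \<in> valring av F" "b \<in> valring av F" "c \<in> valring av F" "d \<in> valring av F"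
    and D: "av (a * d - b * c) = 1"
  shows "lattice_span av F x' y' = lattice_span av F x y"
proof
  show "lattice_span av F x' y' \<subseteq> lattice_span av F x y"
    by (rule lattice_span_subset[OF x' y' O])
  define e where "e = a * d - b * c"
  have e: "e \<noteq> 0" "av e = 1" "e \<in> F"
    using D O by (auto simp: e_def valring_iff F_diff F_mult)
  have "lincomb d x' (- c) y' = vsmult e x" "lincomb (- b) x' a y' = vsmult e y"
    unfolding x' y' e_def by (simp_all add: lincomb_def vsmult_def algebra_simps)
  then have "x = lincomb (d / e) x' (- c / e) y'" "y = lincomb (- b / e) x' (a / e) y'"
    by (simp_all only: lincomb_divide vsmult_inverse_vsmult[OF e(1)])
  moreover have div: "z / e \<in> valring av F" if "z \<in> valring av F" for z
    using that e by (simp add: valring_iff F_divide)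
  have minus: "- z \<in> valring av F" if "z \<in> valring av F" for z
    using that by (simp add: valring_iff F_minus)
  ultimately show "lattice_span av F x y \<subseteq> lattice_span av F x' y'"
    using lattice_span_subset div[OF O(4)] div[OF minus[OF O(2)]] div[OF minus[OF O(3)]] div[OF O(1)]
    by blast
qed

lemma image_lattice_span:
  assumes "\<And>a b. f (lincomb a u b w) = lincomb a u' b w'"
  shows "f ` lattice_span av F u w = lattice_span av F u' w'"
proof -
  have "f ` lattice_span av F u w = {f (lincomb a u b w) | a b. a \<in> valring av F \<and> b \<in> valring av F}"
    unfolding lattice_span_eq by blast
  then show ?thesis
    by (simp add: assms lattice_span_eq)
qed

lemma image_mvec_lattice_span: "mvec A ` lattice_span av F u w = lattice_span av F (mvec A u) (mvec A w)"
  by (rule image_lattice_span) (rule mvec_lincomb)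

lemma vscale_lattice_span: "vscale t (lattice_span av F u w) = lattice_span av F (vsmult t u) (vsmult t w)"
  unfolding vscale_def by (rule image_lattice_span) (simp add: lincomb_def vsmult_def algebra_simps)

definition apt_vertex :: "'c vec2 \<Rightarrow> 'c vec2 \<Rightarrow> 'c \<Rightarrow> 'c vec2 set set" where
  "apt_vertex u w t = hclass F (lattice_span av F u (vsmult t w))"

lemma apt_vertex_in_geodesic: "t \<in> F \<Longrightarrow> t \<noteq> 0 \<Longrightarrow> apt_vertex (P1_vec l1) (P1_vec l2) t \<in> geodesic av F l1 l2"
  unfolding geodesic_def apt_vertex_def vsmult_def by blast

text \<open>If A has matrix ((p, r), (q, s)) in the basis (u, w), its matrix from the basis (u, t w) to
  (u, t' w) is ((p, t r), (q / t', t s / t')); the hypotheses say this is l times a matrix in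
  GL_2 of the valuation ring.\<close>

lemma vertex_act_apt_vertex:
  assumes Au: "mvec A u = lincomb p u q w" and Aw: "mvec A w = lincomb r u s w"
    and in_F: "p \<in> F" "q \<in> F" "r \<in> F" "s \<in> F" "t \<in> F" "t' \<in> F" "l \<in> F"
    and nz: "t \<noteq> 0" "t' \<noteq> 0" "l \<noteq> 0"
    and int: "av p \<le> av l" "av q \<le> av l * av t'" "av t * av r \<le> av l" "av t * av s \<le> av l * av t'"
    and unimodular: "av t * av (p * s - q * r) = av l * av l * av t'"
  shows "vertex_act A (apt_vertex u w t) = apt_vertex u w t'"
proof -
  have "lattice_span av F (mvec A u) (vsmult t (mvec A w)) = lattice_span av F (vsmult l u) (vsmult l (vsmult t' w))"
  proof (rule lattice_span_change_basis)
    show "mvec A u = lincomb (p / l) (vsmult l u) (q / (l * t')) (vsmult l (vsmult t' w))"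
      "vsmult t (mvec A w) = lincomb (t * r / l) (vsmult l u) (t * s / (l * t')) (vsmult l (vsmult t' w))"
      using Au Aw nz by (simp_all add: lincomb_def vsmult_def field_simps)
    show "p / l \<in> valring av F" "t * r / l \<in> valring av F" "q / (l * t') \<in> valring av F"
      "t * s / (l * t') \<in> valring av F"
      using in_F nz int by (simp_all add: valring_iff F_divide F_mult divide_le_eq_1)
    have "p / l * (t * s / (l * t')) - t * r / l * (q / (l * t')) = t * (p * s - q * r) / (l * l * t')"
      using nz by (simp add: field_simps)
    then show "av (p / l * (t * s / (l * t')) - t * r / l * (q / (l * t'))) = 1"
      using unimodular nz by simp
  qed
  then show ?thesis
    using hclass_vscale[OF subfield in_F(7) nz(3), of "lattice_span av F u (vsmult t' w)"]
    by (simp add: apt_vertex_def vertex_act_hclass image_mvec_lattice_span mvec_vsmult vscale_lattice_span)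
qed

end

context discretely_valued_subfield
begin

lemma notin_lattice_span_vsmult_\<pi>:
  assumes "vdet y x \<noteq> 0"
  shows "x \<notin> lattice_span av F y (vsmult \<pi> x)"
proof
  assume "x \<in> lattice_span av F y (vsmult \<pi> x)"
  then obtain a b where b: "b \<in> valring av F" and "x = lincomb a y b (vsmult \<pi> x)"
    by (auto simp: lattice_span_eq)
  then have "lincomb 0 y 1 x = lincomb a y (b * \<pi>) x"
    by (simp add: lincomb_def vsmult_def algebra_simps)
  then have "av b * av \<pi> = 1"
    using lincomb_inj[OF assms] by (metis av_1 av_mult)
  moreover have "av b * av \<pi> < 1"
    using b av_\<pi>_less_1 mult_left_le_one_le[of "av \<pi>" "av b"] by (simp add: valring_iff)
  ultimately show False
    by simp
qed

lemma apt_vertex_adjacent: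
  assumes u: "vec_in F u" and w: "vec_in F w" and D: "vdet u w \<noteq> 0" and t: "t \<in> F" "t \<noteq> 0"
  shows "bt_adj av F (apt_vertex u w t) (apt_vertex u w (\<pi> * t))"
proof -
  have \<pi>: "\<pi> \<in> valring av F"
    using \<pi>_in_F av_\<pi>_less_1 by (simp add: valring_iff)
  define x where "x = vsmult t w"
  define L where "L = lattice_span av F u x"
  define L' where "L' = lattice_span av F u (vsmult \<pi> x)"
  have Dx: "vdet u x \<noteq> 0" "vdet u (vsmult \<pi> x) \<noteq> 0"
    using D t \<pi>_nonzero by (simp_all add: x_def vdet_vsmult)
  have "vec_in F x" "vec_in F (vsmult \<pi> x)"
    using vsmult_in[OF subfield] t w \<pi>_in_F by (simp_all add: x_def)
  then have vertices: "hclass F L \<in> bt_vertices av F" "hclass F L' \<in> bt_vertices av F"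
    unfolding bt_vertices_def L_def L'_def using is_lattice_lattice_span u Dx by blast+
  have "L' \<subseteq> L"
    unfolding L'_def L_def
    by (rule lattice_span_subset[OF _ _ valring_1 valring_0 valring_0 \<pi>]) (simp_all add: lincomb_def vsmult_def)
  moreover have "x \<in> L" "x \<notin> L'"
    using lincomb_in_lattice_span[OF valring_0 valring_1, of u x] notin_lattice_span_vsmult_\<pi>[OF Dx(1)]
    by (simp_all add: L_def L'_def lincomb_def)
  moreover have "vscale \<pi> L \<subseteq> L'"
    unfolding L'_def L_def vscale_lattice_span
    by (rule lattice_span_subset[OF _ _ \<pi> valring_0 valring_0 valring_1]) (simp_all add: lincomb_def vsmult_def)
  moreover have "vdet (vsmult \<pi> x) u \<noteq> 0"
    using Dx by (simp add: vdet_def vsmult_def algebra_simps)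
  then have "u \<in> L'" "u \<notin> vscale \<pi> L"
    using lincomb_in_lattice_span[OF valring_1 valring_0, of u "vsmult \<pi> x"]
      notin_lattice_span_vsmult_\<pi>[of "vsmult \<pi> x" u]
    by (simp_all add: L_def L'_def lincomb_def vscale_lattice_span lattice_span_commute)
  ultimately have "vscale \<pi> L \<subset> L'" "L' \<subset> L"
    by blast+
  moreover have "apt_vertex u w t = hclass F L" "apt_vertex u w (\<pi> * t) = hclass F L'"
    by (simp_all add: apt_vertex_def L_def L'_def x_def vsmult_def mult.assoc)
  ultimately show ?thesis
    unfolding bt_adj_def using vertices hclass_self[OF subfield] uniformizer by metis
qed

end

section \<open>Fixed simplices of elements of finite order\<close>

definition tree_simplex ::
  "('c::field \<Rightarrow> real) \<Rightarrow> 'c set \<Rightarrow> 'c P1 set \<Rightarrow> 'c vec2 set set \<Rightarrow> 'c vec2 set set set \<Rightarrow> bool" where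
  "tree_simplex av F L v0 \<sigma> \<longleftrightarrow> (\<exists>v\<in>T_vertices av F L v0. \<sigma> = {v}) \<or> \<sigma> \<in> T_edges av F L"

lemma polysimplex_iff_tree_simplex:
  "polysimplex av S F Lp vtx \<sigma> \<longleftrightarrow>
     (\<forall>s. s \<notin> S \<longrightarrow> \<sigma> s = {}) \<and> (\<forall>s\<in>S. tree_simplex av (F s) (Lp s) (vtx s) (\<sigma> s))"
  by (simp add: polysimplex_def tree_simplex_def)

lemma geodesic_subset_T_vertices:
  "l1 \<in> L \<Longrightarrow> l2 \<in> L \<Longrightarrow> l1 \<noteq> l2 \<Longrightarrow> geodesic av F l1 l2 \<subseteq> T_vertices av F L v0"
  unfolding T_vertices_def by auto

lemma mvec_mpow_eigenvector: "mvec A v = vsmult z v \<Longrightarrow> mvec (mpow A n) v = vsmult (z ^ n) v"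
proof (induction n)
  case 0
  then show ?case
    by (cases v) (simp add: vsmult_def)
next
  case (Suc n)
  then show ?case
    by (simp add: mvec_mmult mvec_vsmult) (simp add: vsmult_def)
qed

lemma eigenvalue_power_eq:
  assumes "mvec A v = vsmult z v" "v \<noteq> (0, 0)" "mpow A n = (c, 0, 0, c)"
  shows "z ^ n = c"
proof -
  have "vsmult (z ^ n) v = vsmult c v"
    using mvec_mpow_eigenvector[OF assms(1), of n] assms(3) by (cases v) (auto simp: vsmult_def)
  then show ?thesis
    using assms(2) by (cases v) (auto simp: vsmult_def)
qed

context nonarch_valued
begin

lemma av_eigenvalues_eq:
  assumes n: "n > 0" "mpow A n = (c, 0, 0, c)"
    and "mvec A v1 = vsmult z1 v1" "v1 \<noteq> (0, 0)" "mvec A v2 = vsmult z2 v2" "v2 \<noteq> (0, 0)"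
  shows "av z1 = av z2"
proof -
  have "av z1 ^ n = av z2 ^ n"
    using eigenvalue_power_eq[OF _ _ n(2)] assms(3-) by (metis av_power)
  then show ?thesis
    using power_eq_imp_eq_base[of "av z1" n "av z2"] n(1) by simp
qed

text \<open>In the basis (u, w) the matrix of A is ((0, r), (q, s)); its eigenvalues z1, z2 have the
  same absolute value, so |s| = |z1 + z2| \<le> |z1| and |q r| = |z1 z2| = |z1|^2.\<close>

lemma av_square_le_of_finite_order:
  assumes ac: "alg_closed_field TYPE('c)" and n: "n > 0" "mpow A n = (c, 0, 0, c)"
    and D: "vdet u w \<noteq> 0" and Au: "mvec A u = vsmult q w" and Aw: "mvec A w = lincomb r u s w"
    and r: "r \<noteq> 0"
  shows "av s * av s \<le> av q * av r"
proof -
  have eigen: "mvec A (lincomb r u z w) = vsmult z (lincomb r u z w)" "lincomb r u z w \<noteq> (0, 0)"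
    if "z * z = s * z + q * r" for z
  proof -
    have "mvec A (lincomb r u z w) = lincomb r (vsmult q w) z (lincomb r u s w)"
      by (simp only: mvec_lincomb Au Aw)
    also have "\<dots> = lincomb (z * r) u (r * q + z * s) w"
      by (simp add: lincomb_def vsmult_def algebra_simps)
    also have "\<dots> = lincomb (z * r) u (z * z) w"
      using that by (simp add: algebra_simps)
    also have "\<dots> = vsmult z (lincomb r u z w)"
      by (simp add: lincomb_def vsmult_def algebra_simps)
    finally show "mvec A (lincomb r u z w) = vsmult z (lincomb r u z w)" .
    show "lincomb r u z w \<noteq> (0, 0)"
      using lincomb_eq_0_iff[OF D] r by simp
  qed
  have "degree [:- (q * r), - s, 1:] > 0"
    by simp
  then obtain z1 where "poly [:- (q * r), - s, 1:] z1 = 0"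
    using ac unfolding alg_closed_field_def by blast
  then have z1: "z1 * z1 = s * z1 + q * r"
    by (simp add: algebra_simps)
  define z2 where "z2 = s - z1"
  have z2: "z2 * z2 = s * z2 + q * r" and qr: "q * r = - (z1 * z2)"
    using z1 by (simp_all add: z2_def algebra_simps)
  have eq: "av z1 = av z2"
    using av_eigenvalues_eq[OF n] eigen[OF z1] eigen[OF z2] by blast
  have "av s \<le> av z1"
    using av_ultrametric[of z1 z2] eq by (simp add: z2_def)
  moreover have "av q * av r = av z1 * av z1"
    using qr eq by (metis av_minus av_mult)
  ultimately show ?thesis
    by (simp add: mult_mono)
qed

end

context valued_subfield
begin

text \<open>In the basis (u, w) the matrix of A is ((k, r), (0, s)) with |s| = |k|, so A fixes the vertex
  spanned by u and t w as soon as |t r| \<le> |k|.\<close>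

lemma fixed_end_fixed_vertex:
  assumes A: "A \<in> GL2 F" and n: "n > 0" "mpow A n = (c, 0, 0, c)"
    and L: "L \<subseteq> P1_of F" "l \<in> L" "l' \<in> L" "l \<noteq> l'" and fixed: "mobius A l = l"
  shows "\<exists>v\<in>T_vertices av F L v0. vertex_act A v = v"
proof -
  define u where "u = P1_vec l"
  define w where "w = P1_vec l'"
  have uw: "vec_in F u" "vec_in F w" and D: "vdet u w \<noteq> 0"
    using P1_vec_in[OF subfield] L P1_vec_vdet by (auto simp: u_def w_def)
  obtain k where k: "k \<in> F" "k \<noteq> 0" "mvec A u = vsmult k u"
    using mvec_P1_vec[OF subfield A, of l] L fixed by (auto simp: u_def)
  obtain r s where rs: "r \<in> F" "s \<in> F" "mvec A w = lincomb r u s w"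
    using lincomb_coordinates_in[OF subfield uw mvec_in[OF subfield A uw(2)] D] by blast
  have "av s = av k"
  proof (cases "s = k")
    case False
    have "mvec A (lincomb r u (s - k) w) = vsmult s (lincomb r u (s - k) w)"
      using k(3) rs(3) by (simp only: mvec_lincomb) (simp add: lincomb_def vsmult_def algebra_simps)
    moreover have "lincomb r u (s - k) w \<noteq> (0, 0)" "u \<noteq> (0, 0)"
      using lincomb_eq_0_iff[OF D] False P1_vec_nonzero by (auto simp: u_def)
    ultimately show ?thesis
      using av_eigenvalues_eq[OF n] k(3) by blast
  qed simp
  define t where "t = (if r = 0 then 1 else k / r)"
  have t: "t \<in> F" "t \<noteq> 0" "av t * av r \<le> av k"
    using k rs F_1 by (auto simp: t_def F_divide)
  have "vertex_act A (apt_vertex u w t) = apt_vertex u w t"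
  proof (rule vertex_act_apt_vertex)
    show "mvec A u = lincomb k u 0 w"
      using k(3) by (simp add: lincomb_def vsmult_def)
    show "av t * av (k * s - 0 * r) = av k * av k * av t"
      using \<open>av s = av k\<close> by simp
  qed (use k rs t \<open>av s = av k\<close> F_0 in auto)
  moreover have "apt_vertex u w t \<in> T_vertices av F L v0"
    using apt_vertex_in_geodesic[OF t(1,2)] geodesic_subset_T_vertices[OF L(2-4)]
    unfolding u_def w_def by blast
  ultimately show ?thesis
    by blast
qed

lemma apt_vertex_fixed:
  assumes Au: "mvec A u = lincomb 0 u q w" and Aw: "mvec A w = lincomb r u s w"
    and in_F: "q \<in> F" "r \<in> F" "s \<in> F" "\<mu> \<in> F" and nz: "r \<noteq> 0" "\<mu> \<noteq> 0"
    and s_le: "av s * av s \<le> av q * av r" and sq: "av q * av r = av \<mu> * av \<mu>"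
  shows "vertex_act A (apt_vertex u w (\<mu> / r)) = apt_vertex u w (\<mu> / r)"
proof -
  define t where "t = \<mu> / r"
  have t: "t \<in> F" "t \<noteq> 0" "av t * av r = av \<mu>"
    using in_F nz by (simp_all add: t_def F_divide)
  have av_q: "av q \<le> av \<mu> * av t"
    using sq t nz by (simp flip: t(3) add: mult_le_cancel_right_pos mult_ac)
  have "av s \<le> av \<mu>"
  proof (rule ccontr)
    assume "\<not> av s \<le> av \<mu>"
    then have "av \<mu> * av \<mu> < av s * av s"
      by (intro mult_strict_mono) auto
    then show False
      using s_le sq by simp
  qed
  then have "vertex_act A (apt_vertex u w t) = apt_vertex u w t"
    by (intro vertex_act_apt_vertex[OF Au Aw F_0 in_F(1-3) t(1,1) in_F(4) t(2,2) nz(2)])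
      (use sq av_q t in \<open>simp_all add: mult_le_cancel_left_pos mult_ac\<close>)
  then show ?thesis
    by (simp add: t_def)
qed

end

context discretely_valued_subfield
begin

lemma apt_edge_flipped:
  assumes Au: "mvec A u = lincomb 0 u q w" and Aw: "mvec A w = lincomb r u s w"
    and in_F: "q \<in> F" "r \<in> F" "s \<in> F" "\<mu> \<in> F" and nz: "r \<noteq> 0" "\<mu> \<noteq> 0"
    and s_le: "av s * av s \<le> av q * av r" and sq: "av q * av r = av \<pi> * (av \<mu> * av \<mu>)"
  shows "vertex_act A (apt_vertex u w (\<mu> / r)) = apt_vertex u w (\<pi> * (\<mu> / r))"
    and "vertex_act A (apt_vertex u w (\<pi> * (\<mu> / r))) = apt_vertex u w (\<mu> / r)"
proof -
  define t where "t = \<mu> / r"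
  have t: "t \<in> F" "t \<noteq> 0" "av t * av r = av \<mu>" "\<pi> * t \<in> F" "\<pi> * t \<noteq> 0"
    using in_F nz \<pi>_in_F \<pi>_nonzero by (simp_all add: t_def F_divide F_mult)
  have \<pi>\<mu>: "\<pi> * \<mu> \<in> F" "\<pi> * \<mu> \<noteq> 0"
    using in_F nz \<pi>_in_F \<pi>_nonzero by (simp_all add: F_mult)
  have av_q: "av q \<le> av \<mu> * (av \<pi> * av t)"
    using sq t nz by (simp flip: t(3) add: mult_le_cancel_right_pos mult_ac)
  have "av s < av \<mu>"
  proof (rule ccontr)
    assume "\<not> av s < av \<mu>"
    then have "av \<mu> * av \<mu> \<le> av s * av s"
      by (intro mult_mono) auto
    moreover have "av \<pi> * (av \<mu> * av \<mu>) < av \<mu> * av \<mu>"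
      using mult_strict_right_mono[OF av_\<pi>_less_1, of "av \<mu> * av \<mu>"] nz by simp
    ultimately show False
      using s_le sq by simp
  qed
  then have "av (s / \<mu>) \<le> av \<pi>"
    using av_less_1_le_\<pi>[of "s / \<mu>"] in_F nz by (simp add: F_divide)
  then have s_le_\<pi>\<mu>: "av s \<le> av \<pi> * av \<mu>"
    using nz by (simp add: divide_le_eq)
  have "vertex_act A (apt_vertex u w t) = apt_vertex u w (\<pi> * t)"
    by (intro vertex_act_apt_vertex[OF Au Aw F_0 in_F(1-3) t(1,4) in_F(4) t(2,5) nz(2)])
      (use sq av_q t s_le_\<pi>\<mu> in \<open>simp_all add: mult_le_cancel_left_pos mult_ac\<close>)
  moreover have "vertex_act A (apt_vertex u w (\<pi> * t)) = apt_vertex u w t"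
  proof (rule vertex_act_apt_vertex[OF Au Aw F_0 in_F(1-3) t(4,1) \<pi>\<mu>(1) t(5,2) \<pi>\<mu>(2)])
    have "av s * (av \<pi> * av t) \<le> av \<mu> * (av \<pi> * av t)"
      using \<open>av s < av \<mu>\<close> by (intro mult_right_mono) simp_all
    then show "av (\<pi> * t) * av s \<le> av (\<pi> * \<mu>) * av t"
      by (simp add: mult_ac)
  qed (use sq av_q t in \<open>simp_all add: mult_ac\<close>)
  ultimately show "vertex_act A (apt_vertex u w (\<mu> / r)) = apt_vertex u w (\<pi> * (\<mu> / r))"
    and "vertex_act A (apt_vertex u w (\<pi> * (\<mu> / r))) = apt_vertex u w (\<mu> / r)"
    by (simp_all add: t_def)
qed

lemma moved_end_fixed_simplex:
  assumes ac: "alg_closed_field TYPE('c)" and A: "A \<in> GL2 F"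
    and n: "n > 0" "mpow A n = (c, 0, 0, c)"
    and L: "L \<subseteq> P1_of F" "l \<in> L" "mobius A l \<in> L" and moved: "mobius A l \<noteq> l"
  shows "\<exists>\<sigma>. tree_simplex av F L v0 \<sigma> \<and> vertex_act A ` \<sigma> = \<sigma>"
proof -
  define u where "u = P1_vec l"
  define w where "w = P1_vec (mobius A l)"
  have uw: "vec_in F u" "vec_in F w"
    using P1_vec_in[OF subfield] L by (auto simp: u_def w_def)
  have D: "vdet u w \<noteq> 0"
    using P1_vec_vdet moved unfolding u_def w_def by metis
  obtain q where q: "q \<in> F" "q \<noteq> 0" "mvec A u = vsmult q w"
    using mvec_P1_vec[OF subfield A, of l] L by (auto simp: u_def w_def)
  obtain r s where rs: "r \<in> F" "s \<in> F" "mvec A w = lincomb r u s w"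
    using lincomb_coordinates_in[OF subfield uw mvec_in[OF subfield A uw(2)] D] by blast
  have Au: "mvec A u = lincomb 0 u q w"
    using q(3) by (simp add: lincomb_def vsmult_def)
  have "r \<noteq> 0"
  proof
    assume "r = 0"
    then have "mvec A (lincomb s u (- q) w) = (0, 0)"
      using Au rs(3) by (simp only: mvec_lincomb) (simp add: lincomb_def algebra_simps)
    moreover have "lincomb s u (- q) w \<noteq> (0, 0)"
      using lincomb_eq_0_iff[OF D] q(2) by simp
    ultimately show False
      using mvec_nonzero[OF GL2_det[OF A]] by blast
  qed
  have s_le: "av s * av s \<le> av q * av r"
    using av_square_le_of_finite_order[OF ac n D q(3) rs(3) \<open>r \<noteq> 0\<close>] .
  obtain \<mu> where \<mu>: "\<mu> \<in> F" "\<mu> \<noteq> 0"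
    and sqrt: "av q * av r = av \<mu> * av \<mu> \<or> av q * av r = av \<pi> * (av \<mu> * av \<mu>)"
    using exists_sqrt_av[of "q * r"] q rs \<open>r \<noteq> 0\<close> F_mult by auto
  define t where "t = \<mu> / r"
  have t: "t \<in> F" "t \<noteq> 0" "\<pi> * t \<in> F" "\<pi> * t \<noteq> 0"
    using \<mu> rs(1) \<open>r \<noteq> 0\<close> \<pi>_in_F \<pi>_nonzero by (simp_all add: t_def F_divide F_mult)
  have geodesic: "apt_vertex u w t' \<in> geodesic av F l (mobius A l)" if "t' \<in> F" "t' \<noteq> 0" for t'
    using apt_vertex_in_geodesic[OF that] unfolding u_def w_def .
  note coordinates = Au rs(3) q(1) rs(1,2) \<mu>(1) \<open>r \<noteq> 0\<close> \<mu>(2) s_le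
  from sqrt show ?thesis
  proof
    assume "av q * av r = av \<mu> * av \<mu>"
    then have "vertex_act A ` {apt_vertex u w t} = {apt_vertex u w t}"
      using apt_vertex_fixed[OF coordinates] by (simp add: t_def)
    moreover have "tree_simplex av F L v0 {apt_vertex u w t}"
      unfolding tree_simplex_def using geodesic[OF t(1,2)] geodesic_subset_T_vertices[OF L(2,3) moved[symmetric]]
      by blast
    ultimately show ?thesis
      by blast
  next
    assume "av q * av r = av \<pi> * (av \<mu> * av \<mu>)"
    then have "vertex_act A ` {apt_vertex u w t, apt_vertex u w (\<pi> * t)} = {apt_vertex u w t, apt_vertex u w (\<pi> * t)}"
      using apt_edge_flipped[OF coordinates] by (auto simp: t_def)
    moreover have "{apt_vertex u w t, apt_vertex u w (\<pi> * t)} \<in> T_edges av F L"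
      unfolding T_edges_def using apt_vertex_adjacent[OF uw D t(1,2)] geodesic t L(2,3) moved[symmetric]
      by blast
    ultimately show ?thesis
      unfolding tree_simplex_def by blast
  qed
qed

lemma mpow_scalar_fixes_tree_simplex:
  assumes ac: "alg_closed_field TYPE('c)" and A: "A \<in> GL2 F"
    and n: "n > 0" "mpow A n = (c, 0, 0, c)"
    and L: "L \<subseteq> P1_of F" "L \<noteq> {}" "\<forall>a. L \<noteq> {a}" and invariant: "\<forall>l\<in>L. mobius A l \<in> L"
  shows "\<exists>\<sigma>. tree_simplex av F L v0 \<sigma> \<and> vertex_act A ` \<sigma> = \<sigma>"
proof (cases "\<exists>l\<in>L. mobius A l = l")
  case True
  then obtain l where l: "l \<in> L" "mobius A l = l"
    by blast
  moreover obtain l' where "l' \<in> L" "l \<noteq> l'"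
    using L(3) l(1) by blast
  ultimately obtain v where "v \<in> T_vertices av F L v0" "vertex_act A v = v"
    using fixed_end_fixed_vertex[OF A n L(1)] by metis
  then show ?thesis
    unfolding tree_simplex_def by (intro exI[of _ "{v}"]) auto
next
  case False
  moreover obtain l where "l \<in> L"
    using L(2) by blast
  ultimately show ?thesis
    using moved_end_fixed_simplex[OF ac A n L(1)] invariant by blast
qed

end

context nonarch_valued
begin

lemma finite_order_fixes_tree_simplex:
  assumes ac: "alg_closed_field TYPE('c)" and loc: "\<forall>s\<in>S. local_field av (F s)"
    and sub: "pgl_subgroup S F \<Gamma>" and pl: "plectic_semisimple_with av S F \<Gamma> Lp"
    and g: "\<gamma> \<in> \<Gamma>" "finite_order S F \<gamma>" and s: "s \<in> S" and L: "Lp s \<noteq> {}"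
  shows "\<exists>\<sigma>. tree_simplex av (F s) (Lp s) v0 \<sigma> \<and> pgl_act_vertex (\<gamma> s) ` \<sigma> = \<sigma>"
proof -
  obtain \<pi> where dv: "discretely_valued_subfield av (F s) \<pi>"
    using local_field_discretely_valued loc s by blast
  have \<gamma>: "\<gamma> \<in> PGL2_S S F" and Fs: "subfield (F s)"
    using sub g(1) loc s by (auto simp: pgl_subgroup_def local_field_def)
  obtain n c where "n > 0" "mpow (pgl_rep (\<gamma> s)) n = (c, 0, 0, c)"
    using finite_order_mpow_scalar[OF \<gamma> s Fs g(2)] by blast
  moreover have "\<forall>l\<in>Lp s. mobius (pgl_rep (\<gamma> s)) l \<in> Lp s"
    using limit_component_invariant[OF ac loc sub pl g(1) s] by (simp add: pgl_act_eq_mobius)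
  ultimately show ?thesis
    using discretely_valued_subfield.mpow_scalar_fixes_tree_simplex[OF dv ac] pgl_rep_PGL2_S[OF \<gamma> s Fs]
      pl s L by (simp add: pgl_act_vertex_eq_vertex_act plectic_semisimple_with_def)
qed

end

theorem lemma2p19:
  fixes p :: nat and av :: "'c::field \<Rightarrow> real" and S :: "'s set"
    and F :: "'s \<Rightarrow> 'c set" and \<Gamma> :: "('s \<Rightarrow> 'c mat2 set) set"
    and Lp :: "'s \<Rightarrow> 'c P1 set" and vtx :: "'s \<Rightarrow> 'c vec2 set set"
    and \<gamma> :: "'s \<Rightarrow> 'c mat2 set"
  assumes C: "is_C p av"
    and S: "finite S" "S \<noteq> {}"
    and loc: "\<forall>s\<in>S. local_field av (F s)"
    and sub: "pgl_subgroup S F \<Gamma>"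
    and pl: "plectic_semisimple_with av S F \<Gamma> Lp"
    and vtx: "\<forall>s\<in>S. Lp s = {} \<longrightarrow> vtx s \<in> bt_vertices av (F s)
                  \<and> (\<forall>g\<in>\<Gamma>. pgl_act_vertex (g s) (vtx s) = vtx s)"
    and g: "\<gamma> \<in> \<Gamma>" "finite_order S F \<gamma>"
  shows "\<exists>\<sigma>. polysimplex av S F Lp vtx \<sigma> \<and>
           (\<forall>s\<in>S. pgl_act_vertex (\<gamma> s) ` \<sigma> s = \<sigma> s)"
proof -
  interpret nonarch_valued av
    using C by (simp add: is_C_def nonarch_valued_def)
  have ac: "alg_closed_field TYPE('c)"
    using C by (simp add: is_C_def)
  have "\<exists>\<sigma>. tree_simplex av (F s) (Lp s) (vtx s) \<sigma> \<and> pgl_act_vertex (\<gamma> s) ` \<sigma> = \<sigma>"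
    if s: "s \<in> S" for s
  proof (cases "Lp s = {}")
    case True
    then show ?thesis
      using vtx s g(1) by (intro exI[of _ "{vtx s}"]) (simp add: tree_simplex_def T_vertices_def)
  next
    case False
    then show ?thesis
      using finite_order_fixes_tree_simplex[OF ac loc sub pl g s] by blast
  qed
  then obtain \<sigma> where
    "\<forall>s\<in>S. tree_simplex av (F s) (Lp s) (vtx s) (\<sigma> s) \<and> pgl_act_vertex (\<gamma> s) ` \<sigma> s = \<sigma> s"
    by metis
  then show ?thesis
    by (intro exI[of _ "\<lambda>s. if s \<in> S then \<sigma> s else {}"]) (simp add: polysimplex_iff_tree_simplex)
qed

end
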